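(* Let $f:(L',\alpha_{L'})\to(L,\alpha_L)$ be an $\alpha$-cover and $C=\mathfrak{uce}_\alpha(f)(\mathrm{Ker}\,U_{\alpha'})\subseteq\mathrm{Ker}\,U_\alpha$. Then: (a) For any $d\in\mathrm{Der}(L,\alpha_L)$ there exists $\delta_d\in\mathrm{Der}(L',\alpha_{L'})$ with $f\circ\delta_d=d\circ f$ if and only if $\mathfrak{uce}_\alpha(d)(C)\subseteq C$. In that case $\delta_d$ is uniquely determined by $f\circ\delta_d=d\circ f$ and $\delta_d(\mathrm{Ker}\,f)\subseteq\mathrm{Ker}\,f$. (b) The map $\Delta:\{d\in\mathrm{Der}(L,\alpha_L):\mathfrak{uce}_\alpha(d)(C)\subseteq C\}\to\{\rho\in\mathrm{Der}(L',\alpha_{L'}):\rho(\mathrm{Ker}\,f)\subseteq\mathrm{Ker}\,f\}$, $d\mapsto\delta_d$, is a linear isomorphism. (c) For the $\alpha$-cover $U_\alpha:\mathfrak{uce}_\alpha(L)\to L$, the map $d\mapsto\mathfrak{uce}_\alpha(d)$ is a linear isomorphism $\mathrm{Der}(L,\alpha_L)\to\{\delta\in\mathrm{Der}(\mathfrak{uce}_\alpha(L),\overline{\alpha}):\delta(\mathrm{Ker}\,U_\alpha)\subseteq\mathrm{Ker}\,U_\alpha\}$.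
   Context: Hom-Leibniz algebras are multiplicative: $(L,\alpha_L)$ is a $\mathbb{K}$-vector space with bilinear bracket and linear $\alpha_L$ such that $[\alpha_L(x),[y,z]]=[[x,y],\alpha_L(z)]-[[x,z],\alpha_L(y)]$ and $\alpha_L[x,y]=[\alpha_L(x),\alpha_L(y)]$; homomorphisms preserve brackets and commute with structure maps. $\mathrm{Der}(L,\alpha_L)$ is the space of linear $d:L\to L$ with $d[x,y]=[\alpha_L(x),d(y)]+[d(x),\alpha_L(y)]$ and $d\circ\alpha_L=\alpha_L\circ d$. $Z(K)=\{x:[x,y]=0=[y,x]\ \forall y\}$. $(L,\alpha_L)$ is $\alpha$-perfect if $L=[\alpha_L(L),\alpha_L(L)]$. A central extension is a surjective homomorphism $\pi$ with $\mathrm{Ker}\,\pi\subseteq Z(K)$. An $\alpha$-cover is a central extension $f:(L',\alpha_{L'})\to(L,\alpha_L)$ with $(L',\alpha_{L'})$ $\alpha$-perfect (then $L$ is $\alpha$-perfect). For $\alpha$-perfect $(L,\alpha_L)$: $I_L\subseteq\alpha_L(L)\otimes\alpha_L(L)$ is spanned by $-[x_1,x_2]\otimes\alpha_L(x_3)+[x_1,x_3]\otimes\alpha_L(x_2)+\alpha_L(x_1)\otimes[x_2,x_3]$; $\mathfrak{uce}_\alpha(L)=(\alpha_L(L)\otimes\alpha_L(L))/I_L$ with classes $\{\alpha_L(x_1),\alpha_L(x_2)\}$, bracket $[\{a,b\},\{c,e\}]=\{[a,b],[c,e]\}$, endomorphism $\overline{\alpha}\{\alpha_L(x_1),\alpha_L(x_2)\}=\{\alpha_L^2(x_1),\alpha_L^2(x_2)\}$,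 $U_\alpha\{a,b\}=[a,b]$ (the universal $\alpha$-central extension); $U_{\alpha'}$ is the same for $L'$. $\mathfrak{uce}_\alpha(f)\{\alpha_{L'}(x_1),\alpha_{L'}(x_2)\}=\{\alpha_L(f(x_1)),\alpha_L(f(x_2))\}$, and for $d\in\mathrm{Der}(L,\alpha_L)$, $\mathfrak{uce}_\alpha(d)\{\alpha_L(x_1),\alpha_L(x_2)\}=\{d(\alpha_L(x_1)),\alpha_L^2(x_2)\}+\{\alpha_L^2(x_1),d(\alpha_L(x_2))\}$, a derivation of $\mathfrak{uce}_\alpha(L)$. *)

theory Defs
  imports Main "HOL-Library.Poly_Mapping" "HOL-Library.FuncSet"
begin

record ('k, 'a) hlalg =
  vcarr :: "'a set"
  vadd :: "'a \<Rightarrow> 'a \<Rightarrow> 'a"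
  vzero :: "'a"
  vsmult :: "'k \<Rightarrow> 'a \<Rightarrow> 'a"
  vbr :: "'a \<Rightarrow> 'a \<Rightarrow> 'a"
  valpha :: "'a \<Rightarrow> 'a"

definition vector_space_on :: "('k::field, 'a, 'm) hlalg_scheme \<Rightarrow> bool" where
  "vector_space_on L \<longleftrightarrow>
     vzero L \<in> vcarr L \<and>
     (\<forall>x\<in>vcarr L. \<forall>y\<in>vcarr L. vadd L x y \<in> vcarr L) \<and>
     (\<forall>c. \<forall>x\<in>vcarr L. vsmult L c x \<in> vcarr L) \<and>
     (\<forall>x\<in>vcarr L. \<forall>y\<in>vcarr L. \<forall>z\<in>vcarr L. vadd L (vadd L x y) z = vadd L x (vadd L y z)) \<and>
     (\<forall>x\<in>vcarr L. \<forall>y\<in>vcarr L. vadd L x y = vadd L y x) \<and>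
     (\<forall>x\<in>vcarr L. vadd L (vzero L) x = x) \<and>
     (\<forall>x\<in>vcarr L. \<exists>y\<in>vcarr L. vadd L x y = vzero L) \<and>
     (\<forall>c. \<forall>x\<in>vcarr L. \<forall>y\<in>vcarr L. vsmult L c (vadd L x y) = vadd L (vsmult L c x) (vsmult L c y)) \<and>
     (\<forall>c e. \<forall>x\<in>vcarr L. vsmult L (c + e) x = vadd L (vsmult L c x) (vsmult L e x)) \<and>
     (\<forall>c e. \<forall>x\<in>vcarr L. vsmult L (c * e) x = vsmult L c (vsmult L e x)) \<and>
     (\<forall>x\<in>vcarr L. vsmult L 1 x = x)"

definition hom_leibniz :: "('k::field, 'a, 'm) hlalg_scheme \<Rightarrow> bool" where
  "hom_leibniz L \<longleftrightarrow> vector_space_on L \<and>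
     (\<forall>x\<in>vcarr L. \<forall>y\<in>vcarr L. vbr L x y \<in> vcarr L) \<and>
     (\<forall>x\<in>vcarr L. valpha L x \<in> vcarr L) \<and>
     (\<forall>x\<in>vcarr L. \<forall>y\<in>vcarr L. \<forall>z\<in>vcarr L. vbr L (vadd L x y) z = vadd L (vbr L x z) (vbr L y z)) \<and>
     (\<forall>x\<in>vcarr L. \<forall>y\<in>vcarr L. \<forall>z\<in>vcarr L. vbr L x (vadd L y z) = vadd L (vbr L x y) (vbr L x z)) \<and>
     (\<forall>c. \<forall>x\<in>vcarr L. \<forall>y\<in>vcarr L. vbr L (vsmult L c x) y = vsmult L c (vbr L x y)) \<and>
     (\<forall>c. \<forall>x\<in>vcarr L. \<forall>y\<in>vcarr L. vbr L x (vsmult L c y) = vsmult L c (vbr L x y)) \<and>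
     (\<forall>x\<in>vcarr L. \<forall>y\<in>vcarr L. valpha L (vadd L x y) = vadd L (valpha L x) (valpha L y)) \<and>
     (\<forall>c. \<forall>x\<in>vcarr L. valpha L (vsmult L c x) = vsmult L c (valpha L x)) \<and>
     (\<forall>x\<in>vcarr L. \<forall>y\<in>vcarr L. \<forall>z\<in>vcarr L.
        vbr L (valpha L x) (vbr L y z) =
        vadd L (vbr L (vbr L x y) (valpha L z))
               (vsmult L (-1) (vbr L (vbr L x z) (valpha L y)))) \<and>
     (\<forall>x\<in>vcarr L. \<forall>y\<in>vcarr L. valpha L (vbr L x y) = vbr L (valpha L x) (valpha L y))"

definition hl_hom :: "('k::field, 'b, 'm) hlalg_scheme \<Rightarrow> ('k, 'a, 'n) hlalg_scheme \<Rightarrow> ('b \<Rightarrow> 'a) \<Rightarrow> bool" where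
  "hl_hom L' L f \<longleftrightarrow>
     (\<forall>x\<in>vcarr L'. f x \<in> vcarr L) \<and>
     (\<forall>x\<in>vcarr L'. \<forall>y\<in>vcarr L'. f (vadd L' x y) = vadd L (f x) (f y)) \<and>
     (\<forall>c. \<forall>x\<in>vcarr L'. f (vsmult L' c x) = vsmult L c (f x)) \<and>
     (\<forall>x\<in>vcarr L'. \<forall>y\<in>vcarr L'. f (vbr L' x y) = vbr L (f x) (f y)) \<and>
     (\<forall>x\<in>vcarr L'. f (valpha L' x) = valpha L (f x))"

definition hl_ker :: "('k, 'b, 'm) hlalg_scheme \<Rightarrow> ('k, 'a, 'n) hlalg_scheme \<Rightarrow> ('b \<Rightarrow> 'a) \<Rightarrow> 'b set" where
  "hl_ker L' L f = {x \<in> vcarr L'. f x = vzero L}"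

definition hl_center :: "('k, 'a, 'm) hlalg_scheme \<Rightarrow> 'a set" where
  "hl_center K = {x \<in> vcarr K. \<forall>y\<in>vcarr K. vbr K x y = vzero K \<and> vbr K y x = vzero K}"

inductive_set lspan :: "('k, 'a, 'm) hlalg_scheme \<Rightarrow> 'a set \<Rightarrow> 'a set" for L G where
  lspan_zero: "vzero L \<in> lspan L G"
| lspan_gen: "g \<in> G \<Longrightarrow> g \<in> lspan L G"
| lspan_add: "x \<in> lspan L G \<Longrightarrow> y \<in> lspan L G \<Longrightarrow> vadd L x y \<in> lspan L G"
| lspan_smult: "x \<in> lspan L G \<Longrightarrow> vsmult L c x \<in> lspan L G"

definition alpha_perfect :: "('k, 'a, 'm) hlalg_scheme \<Rightarrow> bool" where
  "alpha_perfect L \<longleftrightarrow>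
     vcarr L = lspan L {vbr L (valpha L x) (valpha L y) | x y. x \<in> vcarr L \<and> y \<in> vcarr L}"

definition central_ext :: "('k::field, 'b, 'm) hlalg_scheme \<Rightarrow> ('k, 'a, 'n) hlalg_scheme \<Rightarrow> ('b \<Rightarrow> 'a) \<Rightarrow> bool" where
  "central_ext K L f \<longleftrightarrow> hl_hom K L f \<and> f ` vcarr K = vcarr L \<and> hl_ker K L f \<subseteq> hl_center K"

definition alpha_cover :: "('k::field, 'b, 'm) hlalg_scheme \<Rightarrow> ('k, 'a, 'n) hlalg_scheme \<Rightarrow> ('b \<Rightarrow> 'a) \<Rightarrow> bool" where
  "alpha_cover L' L f \<longleftrightarrow> central_ext L' L f \<and> alpha_perfect L'"

text \<open>Derivations are taken as functions on the carrier (extensional: undefined outside),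
  so that Der(L) is a set of functions with pointwise linear structure.\<close>

definition Der :: "('k::field, 'a, 'm) hlalg_scheme \<Rightarrow> ('a \<Rightarrow> 'a) set" where
  "Der L = {d. d \<in> extensional (vcarr L) \<and>
     (\<forall>x\<in>vcarr L. d x \<in> vcarr L) \<and>
     (\<forall>x\<in>vcarr L. \<forall>y\<in>vcarr L. d (vadd L x y) = vadd L (d x) (d y)) \<and>
     (\<forall>c. \<forall>x\<in>vcarr L. d (vsmult L c x) = vsmult L c (d x)) \<and>
     (\<forall>x\<in>vcarr L. \<forall>y\<in>vcarr L.
        d (vbr L x y) = vadd L (vbr L (valpha L x) (d y)) (vbr L (d x) (valpha L y))) \<and>
     (\<forall>x\<in>vcarr L. d (valpha L x) = valpha L (d x))}"

definition der_add :: "('k, 'a, 'm) hlalg_scheme \<Rightarrow> ('a \<Rightarrow> 'a) \<Rightarrow> ('a \<Rightarrow> 'a) \<Rightarrow> ('a \<Rightarrow> 'a)" where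
  "der_add L d1 d2 = (\<lambda>x\<in>vcarr L. vadd L (d1 x) (d2 x))"

definition der_smult :: "('k, 'a, 'm) hlalg_scheme \<Rightarrow> 'k \<Rightarrow> ('a \<Rightarrow> 'a) \<Rightarrow> ('a \<Rightarrow> 'a)" where
  "der_smult L c d = (\<lambda>x\<in>vcarr L. vsmult L c (d x))"

definition der_lin_iso ::
  "('k, 'a, 'm) hlalg_scheme \<Rightarrow> ('k, 'b, 'n) hlalg_scheme \<Rightarrow> ('a \<Rightarrow> 'a) set \<Rightarrow> ('b \<Rightarrow> 'b) set
     \<Rightarrow> (('a \<Rightarrow> 'a) \<Rightarrow> ('b \<Rightarrow> 'b)) \<Rightarrow> bool" where
  "der_lin_iso L1 L2 S T \<Phi> \<longleftrightarrow> bij_betw \<Phi> S T \<and>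
     (\<forall>d1\<in>S. \<forall>d2\<in>S. \<Phi> (der_add L1 d1 d2) = der_add L2 (\<Phi> d1) (\<Phi> d2)) \<and>
     (\<forall>c. \<forall>d\<in>S. \<Phi> (der_smult L1 c d) = der_smult L2 c (\<Phi> d))"

text \<open>The derivation delta_d of L' lifting d along f (unique when it exists).\<close>
definition lift_der :: "('k::field, 'b, 'm) hlalg_scheme \<Rightarrow> ('b \<Rightarrow> 'a) \<Rightarrow> ('a \<Rightarrow> 'a) \<Rightarrow> ('b \<Rightarrow> 'b)" where
  "lift_der L' f d = (THE \<delta>. \<delta> \<in> Der L' \<and> (\<forall>x\<in>vcarr L'. f (\<delta> x) = d (f x)))"

text \<open>Free vector space on pairs: finitely supported maps.
  alpha(L) \<otimes> alpha(L) is the free space on alpha(L) \<times> alpha(L) modulo the bilinearity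
  relations; uce_alpha(L) is further divided by (the preimage of) I_L.  Elements of
  uce_alpha(L) are the cosets.\<close>

definition psm :: "'k::field \<Rightarrow> ('x \<Rightarrow>\<^sub>0 'k) \<Rightarrow> ('x \<Rightarrow>\<^sub>0 'k)" where
  "psm c v = Poly_Mapping.map (\<lambda>t. c * t) v"

definition gen :: "'a \<Rightarrow> 'a \<Rightarrow> ('a \<times> 'a \<Rightarrow>\<^sub>0 'k::field)" where
  "gen a b = Poly_Mapping.single (a, b) 1"

definition pmlin :: "('a \<times> 'a \<Rightarrow> ('b \<times> 'b \<Rightarrow>\<^sub>0 'k::field)) \<Rightarrow> ('a \<times> 'a \<Rightarrow>\<^sub>0 'k) \<Rightarrow> ('b \<times> 'b \<Rightarrow>\<^sub>0 'k)" where
  "pmlin h v = (\<Sum>p\<in>Poly_Mapping.keys v. psm (Poly_Mapping.lookup v p) (h p))"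

inductive_set pspan :: "('x \<Rightarrow>\<^sub>0 'k::field) set \<Rightarrow> ('x \<Rightarrow>\<^sub>0 'k) set" for G where
  pspan_zero: "0 \<in> pspan G"
| pspan_gen: "g \<in> G \<Longrightarrow> g \<in> pspan G"
| pspan_add: "v \<in> pspan G \<Longrightarrow> w \<in> pspan G \<Longrightarrow> v + w \<in> pspan G"
| pspan_smult: "v \<in> pspan G \<Longrightarrow> psm c v \<in> pspan G"

definition free_on :: "'a set \<Rightarrow> ('a \<times> 'a \<Rightarrow>\<^sub>0 'k::field) set" where
  "free_on A = {v. Poly_Mapping.keys v \<subseteq> A \<times> A}"

definition tensor_rels :: "('k::field, 'a, 'm) hlalg_scheme \<Rightarrow> ('a \<times> 'a \<Rightarrow>\<^sub>0 'k) set" where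
  "tensor_rels L = (let A = valpha L ` vcarr L in
      {gen (vadd L a a') b - gen a b - gen a' b | a a' b. a \<in> A \<and> a' \<in> A \<and> b \<in> A}
    \<union> {gen a (vadd L b b') - gen a b - gen a b' | a b b'. a \<in> A \<and> b \<in> A \<and> b' \<in> A}
    \<union> {gen (vsmult L c a) b - psm c (gen a b) | c a b. a \<in> A \<and> b \<in> A}
    \<union> {gen a (vsmult L c b) - psm c (gen a b) | c a b. a \<in> A \<and> b \<in> A})"

definition I_gens :: "('k::field, 'a, 'm) hlalg_scheme \<Rightarrow> ('a \<times> 'a \<Rightarrow>\<^sub>0 'k) set" where
  "I_gens L = {- gen (vbr L x1 x2) (valpha L x3) + gen (vbr L x1 x3) (valpha L x2)
                 + gen (valpha L x1) (vbr L x2 x3) | x1 x2 x3.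
               x1 \<in> vcarr L \<and> x2 \<in> vcarr L \<and> x3 \<in> vcarr L}"

definition uce_rel :: "('k::field, 'a, 'm) hlalg_scheme \<Rightarrow> ('a \<times> 'a \<Rightarrow>\<^sub>0 'k) set" where
  "uce_rel L = pspan (tensor_rels L \<union> I_gens L)"

definition ucls :: "('k::field, 'a, 'm) hlalg_scheme \<Rightarrow> ('a \<times> 'a \<Rightarrow>\<^sub>0 'k) \<Rightarrow> ('a \<times> 'a \<Rightarrow>\<^sub>0 'k) set" where
  "ucls L v = (\<lambda>r. v + r) ` uce_rel L"

definition urep :: "'x set \<Rightarrow> 'x" where
  "urep X = (SOME v. v \<in> X)"

definition uce :: "('k::field, 'a, 'm) hlalg_scheme \<Rightarrow> ('k, ('a \<times> 'a \<Rightarrow>\<^sub>0 'k) set) hlalg" where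
  "uce L = \<lparr> vcarr = ucls L ` free_on (valpha L ` vcarr L),
     vadd = (\<lambda>X Y. ucls L (urep X + urep Y)),
     vzero = ucls L 0,
     vsmult = (\<lambda>c X. ucls L (psm c (urep X))),
     vbr = (\<lambda>X Y. ucls L (pmlin (\<lambda>p. pmlin (\<lambda>q. gen (vbr L (fst p) (snd p)) (vbr L (fst q) (snd q)))
                                    (urep Y)) (urep X))),
     valpha = (\<lambda>X. ucls L (pmlin (\<lambda>p. gen (valpha L (fst p)) (valpha L (snd p))) (urep X))) \<rparr>"

definition lsum :: "('k, 'a, 'm) hlalg_scheme \<Rightarrow> ('x \<Rightarrow> 'a) \<Rightarrow> 'x set \<Rightarrow> 'a" where
  "lsum L g S = Finite_Set.fold (\<lambda>x acc. vadd L (g x) acc) (vzero L) S"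

definition uceU :: "('k::field, 'a, 'm) hlalg_scheme \<Rightarrow> ('a \<times> 'a \<Rightarrow>\<^sub>0 'k) set \<Rightarrow> 'a" where
  "uceU L X = (let v = urep X in
     lsum L (\<lambda>p. vsmult L (Poly_Mapping.lookup v p) (vbr L (fst p) (snd p))) (Poly_Mapping.keys v))"

text \<open>uce_alpha(f) : {alpha'(x1), alpha'(x2)} \<mapsto> {alpha(f x1), alpha(f x2)}; for a homomorphism f,
  alpha(f x) = f(alpha' x), so on classes {a,b} (a,b in alpha'(L')) this is {f a, f b}.\<close>
definition uce_map :: "('k::field, 'a, 'm) hlalg_scheme \<Rightarrow> ('b \<Rightarrow> 'a)
     \<Rightarrow> ('b \<times> 'b \<Rightarrow>\<^sub>0 'k) set \<Rightarrow> ('a \<times> 'a \<Rightarrow>\<^sub>0 'k) set" where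
  "uce_map L f X = ucls L (pmlin (\<lambda>p. gen (f (fst p)) (f (snd p))) (urep X))"

definition uce_der :: "('k::field, 'a, 'm) hlalg_scheme \<Rightarrow> ('a \<Rightarrow> 'a)
     \<Rightarrow> ('a \<times> 'a \<Rightarrow>\<^sub>0 'k) set \<Rightarrow> ('a \<times> 'a \<Rightarrow>\<^sub>0 'k) set" where
  "uce_der L d = (\<lambda>X\<in>vcarr (uce L).
     ucls L (pmlin (\<lambda>p. gen (d (fst p)) (valpha L (snd p)) + gen (valpha L (fst p)) (d (snd p))) (urep X)))"

end

theory Submission
  imports Defs
begin

text \<open>
  Everything is computed on representatives: an element of \<open>uce\<^sub>\<alpha>(L)\<close> is the class of a finite
  formal combination of pairs, and \<open>U\<^sub>\<alpha>\<close>, \<open>uce\<^sub>\<alpha>(f)\<close> and \<open>uce\<^sub>\<alpha>(d)\<close> are induced by maps on pairs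
  that respect the defining relations. Because \<open>Ker f\<close> is central, the bracket of \<open>L'\<close> only depends
  on the images of its arguments under \<open>f\<close>; hence any set-theoretic section \<open>s\<close> of \<open>f\<close> induces a
  linear map \<open>{a,b} \<mapsto> [s a, s b]\<close> from \<open>uce\<^sub>\<alpha>(L)\<close> to \<open>L'\<close> which undoes \<open>uce\<^sub>\<alpha>(f)\<close> up to \<open>U\<^sub>\<alpha>'\<close>.

  (a) A lift \<open>\<delta>\<close> of \<open>d\<close> makes \<open>uce\<^sub>\<alpha>(f)\<close> intertwine \<open>uce\<^sub>\<alpha>(\<delta>)\<close> and \<open>uce\<^sub>\<alpha>(d)\<close>, and \<open>uce\<^sub>\<alpha>(\<delta>)\<close> preserves
  \<open>Ker U\<^sub>\<alpha>'\<close>, so \<open>uce\<^sub>\<alpha>(d)\<close> preserves \<open>C\<close>. Conversely, if it does, \<open>\<delta>(U\<^sub>\<alpha>' v) := s(uce\<^sub>\<alpha>(d)(uce\<^sub>\<alpha>(f) v))\<close>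
  is well defined and is a lift. Two lifts agree on the spanning brackets \<open>[\<alpha> x, \<alpha> y]\<close> of the
  \<open>\<alpha>\<close>-perfect \<open>L'\<close>, since there the Leibniz rule only produces brackets.
  (b) A derivation preserving the kernel of a surjective homomorphism descends along it; this
  inverts \<open>d \<mapsto> \<delta>\<^sub>d\<close>. (c) is the same argument for the cover \<open>U\<^sub>\<alpha>\<close>, where \<open>U\<^sub>\<alpha> \<circ> uce\<^sub>\<alpha>(d) = d \<circ> U\<^sub>\<alpha>\<close>.
\<close>

section \<open>Vector spaces on carriers\<close>

lemma lookup_psm [simp]: "Poly_Mapping.lookup (psm c v) p = c * Poly_Mapping.lookup v p"
  by (simp add: psm_def Poly_Mapping.map.rep_eq when_def)

lemma keys_psm: "Poly_Mapping.keys (psm c v) \<subseteq> Poly_Mapping.keys v"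
  by (auto simp: in_keys_iff)

lemma lsum_empty [simp]: "lsum V g {} = vzero V"
  by (simp add: lsum_def)

locale vspace =
  fixes V :: "('k::field, 'a, 'm) hlalg_scheme"
  assumes vector_space: "vector_space_on V"
begin

lemma zero_in [simp]: "vzero V \<in> vcarr V"
  using vector_space unfolding vector_space_on_def by (elim conjE) blast
lemma add_in [simp]: "x \<in> vcarr V \<Longrightarrow> y \<in> vcarr V \<Longrightarrow> vadd V x y \<in> vcarr V"
  using vector_space unfolding vector_space_on_def by (elim conjE) blast
lemma sm_in [simp]: "x \<in> vcarr V \<Longrightarrow> vsmult V c x \<in> vcarr V"
  using vector_space unfolding vector_space_on_def by (elim conjE) blast
lemma add_assoc: "x \<in> vcarr V \<Longrightarrow> y \<in> vcarr V \<Longrightarrow> z \<in> vcarr V \<Longrightarrow>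
    vadd V (vadd V x y) z = vadd V x (vadd V y z)"
  using vector_space unfolding vector_space_on_def by (elim conjE) blast
lemma add_comm: "x \<in> vcarr V \<Longrightarrow> y \<in> vcarr V \<Longrightarrow> vadd V x y = vadd V y x"
  using vector_space unfolding vector_space_on_def by (elim conjE) blast
lemma zero_add [simp]: "x \<in> vcarr V \<Longrightarrow> vadd V (vzero V) x = x"
  using vector_space unfolding vector_space_on_def by (elim conjE) blast
lemma ex_neg: "x \<in> vcarr V \<Longrightarrow> \<exists>y\<in>vcarr V. vadd V x y = vzero V"
  using vector_space unfolding vector_space_on_def by (elim conjE) blast
lemma sm_add: "x \<in> vcarr V \<Longrightarrow> y \<in> vcarr V \<Longrightarrow>
    vsmult V c (vadd V x y) = vadd V (vsmult V c x) (vsmult V c y)"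
  using vector_space unfolding vector_space_on_def by (elim conjE) blast
lemma add_sm: "x \<in> vcarr V \<Longrightarrow> vsmult V (c + e) x = vadd V (vsmult V c x) (vsmult V e x)"
  using vector_space unfolding vector_space_on_def by (elim conjE) blast
lemma sm_sm: "x \<in> vcarr V \<Longrightarrow> vsmult V (c * e) x = vsmult V c (vsmult V e x)"
  using vector_space unfolding vector_space_on_def by (elim conjE) blast
lemma sm_one [simp]: "x \<in> vcarr V \<Longrightarrow> vsmult V 1 x = x"
  using vector_space unfolding vector_space_on_def by (elim conjE) simp

lemma add_zero [simp]: "x \<in> vcarr V \<Longrightarrow> vadd V x (vzero V) = x"
  using add_comm zero_add zero_in by metis

lemma add_lcomm: "x \<in> vcarr V \<Longrightarrow> y \<in> vcarr V \<Longrightarrow> z \<in> vcarr V \<Longrightarrow>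
    vadd V x (vadd V y z) = vadd V y (vadd V x z)"
  by (metis add_assoc add_comm)

lemma add_swap4: "a \<in> vcarr V \<Longrightarrow> b \<in> vcarr V \<Longrightarrow> c \<in> vcarr V \<Longrightarrow> d \<in> vcarr V \<Longrightarrow>
    vadd V (vadd V a b) (vadd V c d) = vadd V (vadd V a c) (vadd V b d)"
  by (simp add: add_assoc add_lcomm)

lemma add_left_cancel:
  assumes "x \<in> vcarr V" "y \<in> vcarr V" "z \<in> vcarr V" "vadd V x y = vadd V x z"
  shows "y = z"
proof -
  obtain x' where x': "x' \<in> vcarr V" "vadd V x x' = vzero V" using ex_neg assms(1) by blast
  have "y = vadd V (vadd V x' x) y" using x' assms by (simp add: add_comm)
  also have "\<dots> = vadd V x' (vadd V x z)" using x' assms by (simp add: add_assoc)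
  also have "\<dots> = vadd V (vadd V x' x) z" using x' assms by (simp add: add_assoc)
  also have "\<dots> = z" using x' assms by (simp add: add_comm)
  finally show ?thesis .
qed

lemma sm_zero_left [simp]:
  assumes "x \<in> vcarr V"
  shows "vsmult V 0 x = vzero V"
proof -
  have "vadd V (vsmult V 0 x) (vsmult V 0 x) = vadd V (vsmult V 0 x) (vzero V)"
    using add_sm[of x 0 0] assms by simp
  then show ?thesis using add_left_cancel assms by (metis sm_in zero_in)
qed

lemma sm_zero_right [simp]: "vsmult V c (vzero V) = vzero V"
proof -
  have "vadd V (vsmult V c (vzero V)) (vsmult V c (vzero V)) = vadd V (vsmult V c (vzero V)) (vzero V)"
    using sm_add[of "vzero V" "vzero V" c] by simp
  then show ?thesis using add_left_cancel by (metis sm_in zero_in)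
qed

lemma add_neg [simp]: "x \<in> vcarr V \<Longrightarrow> vadd V x (vsmult V (-1) x) = vzero V"
  using add_sm[of x 1 "-1"] by simp

lemma neg_add [simp]: "x \<in> vcarr V \<Longrightarrow> vadd V (vsmult V (-1) x) x = vzero V"
  using add_neg add_comm by (metis sm_in)

lemma diff_zero_eq:
  assumes "x \<in> vcarr V" "y \<in> vcarr V" "vadd V x (vsmult V (-1) y) = vzero V"
  shows "x = y"
proof -
  have "x = vadd V x (vadd V (vsmult V (-1) y) y)" using assms by simp
  also have "\<dots> = vadd V (vadd V x (vsmult V (-1) y)) y" by (metis add_assoc sm_in assms(1,2))
  also have "\<dots> = y" using assms by simp
  finally show ?thesis .
qed

lemma add_diff_cancel: "x \<in> vcarr V \<Longrightarrow> y \<in> vcarr V \<Longrightarrow> x = vadd V y (vadd V x (vsmult V (-1) y))"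
  by (metis add_assoc add_comm add_in neg_add sm_in zero_add)

lemma add_minus_summands: "y \<in> vcarr V \<Longrightarrow> z \<in> vcarr V \<Longrightarrow>
    vadd V (vadd V (vadd V y z) (vsmult V (-1) y)) (vsmult V (-1) z) = vzero V"
  by (metis add_assoc add_comm add_in add_neg add_zero sm_in)

lemma add_minus_swap:
  assumes "p \<in> vcarr V" "q \<in> vcarr V"
  shows "vadd V (vadd V q (vsmult V (-1) p)) (vadd V p (vsmult V (-1) q)) = vzero V"
proof -
  have "vadd V (vadd V q (vsmult V (-1) p)) (vadd V p (vsmult V (-1) q))
      = vadd V (vadd V q (vsmult V (-1) q)) (vadd V (vsmult V (-1) p) p)"
    using assms by (simp add: add_swap4 add_comm[of q])
  then show ?thesis using assms by simp
qed

definition lsum_step :: "('x \<Rightarrow> 'a) \<Rightarrow> 'x \<Rightarrow> 'a \<Rightarrow> 'a" where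
  "lsum_step g x acc = vadd V (g x) (if acc \<in> vcarr V then acc else vzero V)"

lemma lsum_eq_fold_step: "g ` S \<subseteq> vcarr V \<Longrightarrow> lsum V g S = Finite_Set.fold (lsum_step g) (vzero V) S"
  unfolding lsum_def by (rule fold_closed_eq[where B="vcarr V"]) (auto simp: lsum_step_def)

lemma lsum_step_commute: "g ` S \<subseteq> vcarr V \<Longrightarrow> comp_fun_commute_on S (lsum_step g)"
  unfolding comp_fun_commute_on_def fun_eq_iff lsum_step_def
  by (auto simp: image_subset_iff intro!: add_lcomm add_comm)

lemma fold_lsum_step_insert:
  assumes "finite S" "x \<notin> S" "g ` insert x S \<subseteq> vcarr V"
  shows "Finite_Set.fold (lsum_step g) (vzero V) (insert x S)
      = lsum_step g x (Finite_Set.fold (lsum_step g) (vzero V) S)"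
  using comp_fun_commute_on.fold_insert[OF lsum_step_commute[OF assms(3)] _ assms(1,2)] by simp

lemma lsum_step_in [simp]: "g x \<in> vcarr V \<Longrightarrow> lsum_step g x acc \<in> vcarr V"
  by (simp add: lsum_step_def)

lemma fold_lsum_step_in:
  assumes "finite S" "g ` S \<subseteq> vcarr V"
  shows "Finite_Set.fold (lsum_step g) (vzero V) S \<in> vcarr V"
  using assms
proof (induction S rule: finite_induct)
  case (insert x F)
  then show ?case using fold_lsum_step_insert[OF insert(1,2) insert(4)] by simp
qed simp

lemma lsum_in [simp]: "g ` S \<subseteq> vcarr V \<Longrightarrow> lsum V g S \<in> vcarr V"
proof (cases "finite S")
  case True
  assume "g ` S \<subseteq> vcarr V"
  then show ?thesis using True lsum_eq_fold_step fold_lsum_step_in by metis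
qed (simp add: lsum_def)

lemma lsum_insert:
  assumes "finite S" "x \<notin> S" "g ` insert x S \<subseteq> vcarr V"
  shows "lsum V g (insert x S) = vadd V (g x) (lsum V g S)"
proof -
  have "g ` S \<subseteq> vcarr V" using assms by auto
  then show ?thesis using assms
    by (simp add: lsum_eq_fold_step fold_lsum_step_insert lsum_step_def fold_lsum_step_in)
qed

lemma lsum_cong: "(\<And>x. x \<in> S \<Longrightarrow> g x = h x) \<Longrightarrow> lsum V g S = lsum V h S"
  unfolding lsum_def by (rule fold_closed_eq[where B=UNIV]) auto

lemma lsum_add:
  assumes "finite S" "g ` S \<subseteq> vcarr V" "h ` S \<subseteq> vcarr V"
  shows "lsum V (\<lambda>x. vadd V (g x) (h x)) S = vadd V (lsum V g S) (lsum V h S)"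
  using assms
proof (induction S rule: finite_induct)
  case (insert x F)
  have "(\<lambda>x. vadd V (g x) (h x)) ` insert x F \<subseteq> vcarr V"
    using insert.prems by (auto simp: image_subset_iff)
  then show ?case using insert by (simp add: lsum_insert add_swap4)
qed simp

lemma lsum_sm:
  assumes "finite S" "g ` S \<subseteq> vcarr V"
  shows "lsum V (\<lambda>x. vsmult V c (g x)) S = vsmult V c (lsum V g S)"
  using assms
proof (induction S rule: finite_induct)
  case (insert x F)
  have "(\<lambda>x. vsmult V c (g x)) ` insert x F \<subseteq> vcarr V"
    using insert.prems by (auto simp: image_subset_iff)
  then show ?case using insert by (simp add: lsum_insert sm_add)
qed simp

lemma lsum_zero: "(\<And>x. x \<in> S \<Longrightarrow> g x = vzero V) \<Longrightarrow> lsum V g S = vzero V"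
proof -
  assume zero: "\<And>x. x \<in> S \<Longrightarrow> g x = vzero V"
  have "lsum V g S = lsum V (\<lambda>_. vzero V) S" by (rule lsum_cong) (simp add: zero)
  moreover have "finite S \<Longrightarrow> lsum V (\<lambda>_. vzero V) S = vzero V"
  proof (induction S rule: finite_induct)
    case (insert x F)
    then show ?case using lsum_insert[of F x "\<lambda>_. vzero V"] by (simp add: image_subset_iff)
  qed simp
  ultimately show ?thesis by (cases "finite S") (auto simp: lsum_def)
qed

lemma lsum_Un:
  assumes "finite S" "finite T" "S \<inter> T = {}" "g ` (S \<union> T) \<subseteq> vcarr V"
  shows "lsum V g (S \<union> T) = vadd V (lsum V g S) (lsum V g T)"
  using assms
proof (induction S rule: finite_induct)
  case (insert x F)
  have "g ` F \<subseteq> vcarr V" "g ` T \<subseteq> vcarr V" "g x \<in> vcarr V" using insert.prems by auto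
  then show ?case using insert by (simp add: lsum_insert add_assoc)
qed simp

lemma lsum_mono_neutral:
  assumes "finite T" "S \<subseteq> T" "\<And>x. x \<in> T - S \<Longrightarrow> g x = vzero V" "g ` T \<subseteq> vcarr V"
  shows "lsum V g T = lsum V g S"
proof -
  have "T = S \<union> (T - S)" using assms by auto
  then have "lsum V g T = vadd V (lsum V g S) (lsum V g (T - S))"
    using lsum_Un[of S "T - S" g] assms by (metis Diff_disjoint finite_Diff finite_subset)
  also have "lsum V g (T - S) = vzero V" by (rule lsum_zero) (simp add: assms)
  moreover have "lsum V g S \<in> vcarr V" using assms by (intro lsum_in) auto
  ultimately show ?thesis by simp
qed

definition lincomb :: "('x \<Rightarrow> 'a) \<Rightarrow> ('x \<Rightarrow>\<^sub>0 'k) \<Rightarrow> 'a" where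
  "lincomb g v = lsum V (\<lambda>p. vsmult V (Poly_Mapping.lookup v p) (g p)) (Poly_Mapping.keys v)"

lemma lincomb_in [simp]: "(\<And>p. g p \<in> vcarr V) \<Longrightarrow> lincomb g v \<in> vcarr V"
  unfolding lincomb_def by (rule lsum_in) auto

lemma lincomb_superset:
  assumes "finite S" "Poly_Mapping.keys v \<subseteq> S" "\<And>p. g p \<in> vcarr V"
  shows "lincomb g v = lsum V (\<lambda>p. vsmult V (Poly_Mapping.lookup v p) (g p)) S"
  unfolding lincomb_def using assms
  by (intro lsum_mono_neutral[symmetric]) (auto simp: in_keys_iff)

lemma lincomb_add:
  assumes "\<And>p. g p \<in> vcarr V"
  shows "lincomb g (v + w) = vadd V (lincomb g v) (lincomb g w)"
proof -
  let ?S = "Poly_Mapping.keys v \<union> Poly_Mapping.keys w"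
  have "lincomb g (v + w) = lsum V (\<lambda>p. vsmult V (Poly_Mapping.lookup (v + w) p) (g p)) ?S"
    using assms keys_add[of v w] by (intro lincomb_superset) auto
  also have "\<dots> = lsum V (\<lambda>p. vadd V (vsmult V (Poly_Mapping.lookup v p) (g p))
                                  (vsmult V (Poly_Mapping.lookup w p) (g p))) ?S"
    by (rule lsum_cong) (simp add: lookup_add add_sm assms)
  also have "\<dots> = vadd V (lsum V (\<lambda>p. vsmult V (Poly_Mapping.lookup v p) (g p)) ?S)
                          (lsum V (\<lambda>p. vsmult V (Poly_Mapping.lookup w p) (g p)) ?S)"
    by (rule lsum_add) (auto simp: assms)
  also have "\<dots> = vadd V (lincomb g v) (lincomb g w)"
    using assms by (simp add: lincomb_superset[of ?S])
  finally show ?thesis .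
qed

lemma lincomb_psm:
  assumes "\<And>p. g p \<in> vcarr V"
  shows "lincomb g (psm c v) = vsmult V c (lincomb g v)"
proof -
  have "lincomb g (psm c v)
      = lsum V (\<lambda>p. vsmult V (Poly_Mapping.lookup (psm c v) p) (g p)) (Poly_Mapping.keys v)"
    using assms keys_psm[of c v] by (intro lincomb_superset) auto
  also have "\<dots> = lsum V (\<lambda>p. vsmult V c (vsmult V (Poly_Mapping.lookup v p) (g p))) (Poly_Mapping.keys v)"
    by (rule lsum_cong) (simp add: sm_sm assms)
  also have "\<dots> = vsmult V c (lincomb g v)"
    unfolding lincomb_def by (rule lsum_sm) (auto simp: assms)
  finally show ?thesis .
qed

lemma lincomb_zero [simp]: "lincomb g 0 = vzero V"
  by (simp add: lincomb_def)

lemma lincomb_single: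
  assumes "\<And>p. g p \<in> vcarr V"
  shows "lincomb g (Poly_Mapping.single p c) = vsmult V c (g p)"
proof -
  have "lincomb g (Poly_Mapping.single p c)
      = lsum V (\<lambda>q. vsmult V (Poly_Mapping.lookup (Poly_Mapping.single p c) q) (g q)) {p}"
    using assms by (intro lincomb_superset) auto
  then show ?thesis using assms lsum_insert[of "{}" p] by simp
qed

lemma lincomb_cong: "(\<And>p. p \<in> Poly_Mapping.keys v \<Longrightarrow> g p = g' p) \<Longrightarrow> lincomb g v = lincomb g' v"
  unfolding lincomb_def by (rule lsum_cong) simp

lemma lincomb_sum:
  assumes "finite I" "\<And>p. g p \<in> vcarr V"
  shows "lincomb g (sum F I) = lsum V (\<lambda>i. lincomb g (F i)) I"
  using assms(1)
proof (induction I rule: finite_induct)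
  case (insert x F')
  then show ?case using assms(2) by (simp add: lincomb_add lsum_insert image_subset_iff)
qed simp

end

section \<open>The free vector space on pairs\<close>

lemma psm_add_right: "psm c (v + w) = psm c v + psm c w"
  by (rule poly_mapping_eqI) (simp add: lookup_add distrib_left)
lemma psm_add_left: "psm (c + e) v = psm c v + psm e v"
  by (rule poly_mapping_eqI) (simp add: lookup_add distrib_right)
lemma psm_psm [simp]: "psm c (psm e v) = psm (c * e) v"
  by (rule poly_mapping_eqI) simp
lemma psm_one [simp]: "psm 1 v = v"
  by (rule poly_mapping_eqI) simp
lemma psm_zero_left [simp]: "psm 0 v = 0"
  by (rule poly_mapping_eqI) simp
lemma psm_minus_one: "psm (-1) v = - v"
  by (rule poly_mapping_eqI) simp
lemma psm_diff: "psm c (v - w) = psm c v - psm c w"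
  by (rule poly_mapping_eqI) (simp add: lookup_minus right_diff_distrib)
lemma psm_single: "psm c (Poly_Mapping.single p e) = Poly_Mapping.single p (c * e)"
  by (rule poly_mapping_eqI) (simp add: lookup_single when_def)
lemma psm_sum: "psm c (sum F I) = sum (\<lambda>i. psm c (F i)) I"
  by (rule poly_mapping_eqI) (simp add: lookup_sum sum_distrib_left)

definition free_vs :: "('k::field, 'x \<Rightarrow>\<^sub>0 'k) hlalg" where
  "free_vs = \<lparr>vcarr = UNIV, vadd = (+), vzero = 0, vsmult = psm, vbr = (\<lambda>x y. 0), valpha = id\<rparr>"

lemma free_vs_simps [simp]:
  "vcarr free_vs = UNIV" "vadd free_vs = (+)" "vzero free_vs = 0" "vsmult free_vs = psm"
  by (simp_all add: free_vs_def)

lemma vspace_free_vs: "vspace (free_vs :: ('k::field, 'x \<Rightarrow>\<^sub>0 'k) hlalg)"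
proof -
  have "\<forall>x::'x \<Rightarrow>\<^sub>0 'k. \<exists>y. x + y = 0" by (metis right_minus)
  then show ?thesis unfolding vspace_def vector_space_on_def
    by (simp add: psm_add_right psm_add_left add.assoc add.commute)
qed

interpretation free: vspace "free_vs :: ('k::field, 'x \<Rightarrow>\<^sub>0 'k) hlalg"
  by (rule vspace_free_vs)

lemma lsum_free_vs: "lsum free_vs g S = sum g S"
  by (simp add: lsum_def sum.eq_fold o_def)

lemma pmlin_eq_lincomb: "pmlin h v = free.lincomb h v"
  by (simp add: pmlin_def free.lincomb_def lsum_free_vs)

lemma pmlin_add: "pmlin h (v + w) = pmlin h v + pmlin h w"
  by (simp add: pmlin_eq_lincomb free.lincomb_add)
lemma pmlin_psm: "pmlin h (psm c v) = psm c (pmlin h v)"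
  by (simp add: pmlin_eq_lincomb free.lincomb_psm)
lemma pmlin_zero [simp]: "pmlin h 0 = 0"
  by (simp add: pmlin_eq_lincomb)
lemma pmlin_single: "pmlin h (Poly_Mapping.single p c) = psm c (h p)"
  by (simp add: pmlin_eq_lincomb free.lincomb_single)
lemma pmlin_minus: "pmlin h (- v) = - pmlin h v"
  by (metis pmlin_psm psm_minus_one)
lemma pmlin_diff: "pmlin h (v - w) = pmlin h v - pmlin h w"
  by (metis diff_conv_add_uminus pmlin_add pmlin_minus)
lemma pmlin_cong: "(\<And>p. p \<in> Poly_Mapping.keys v \<Longrightarrow> g p = g' p) \<Longrightarrow> pmlin g v = pmlin g' v"
  by (simp add: pmlin_def)

lemma pmlin_gen [simp]: "pmlin h (gen a b) = h (a, b)"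
  by (simp add: gen_def pmlin_single)
lemma psm_gen: "psm c (gen a b) = Poly_Mapping.single (a, b) c"
  by (simp add: gen_def psm_single)

lemma pmlin_fun_add: "pmlin (\<lambda>p. g p + h p) v = pmlin g v + pmlin h v"
  by (simp add: pmlin_def psm_add_right sum.distrib)
lemma pmlin_fun_diff: "pmlin (\<lambda>p. g p - h p) v = pmlin g v - pmlin h v"
  by (simp add: pmlin_def psm_diff sum_subtractf)
lemma pmlin_fun_psm: "pmlin (\<lambda>p. psm c (g p)) v = psm c (pmlin g v)"
  by (simp add: pmlin_def psm_sum mult.commute)

lemma poly_mapping_sum_singles:
  "v = (\<Sum>p\<in>Poly_Mapping.keys v. Poly_Mapping.single p (Poly_Mapping.lookup v p))"
  by (rule poly_mapping_eqI)
     (auto simp: lookup_sum lookup_single when_def in_keys_iff sum.delta[OF finite_keys])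

lemma poly_mapping_induct [consumes 1, case_names zero step]:
  fixes v :: "'x \<Rightarrow>\<^sub>0 'k::field"
  assumes "Poly_Mapping.keys v \<subseteq> K" "P 0"
    "\<And>p c w. p \<in> K \<Longrightarrow> Poly_Mapping.keys w \<subseteq> K \<Longrightarrow> P w \<Longrightarrow> P (Poly_Mapping.single p c + w)"
  shows "P v"
proof -
  have "P (\<Sum>p\<in>I. Poly_Mapping.single p (cf p)) \<and>
      Poly_Mapping.keys (\<Sum>p\<in>I. Poly_Mapping.single p (cf p)) \<subseteq> K"
    if "finite I" "I \<subseteq> K" for I cf
    using that
  proof (induction I rule: finite_induct)
    case (insert x F)
    let ?w = "\<Sum>p\<in>F. Poly_Mapping.single p (cf p)"
    have "P (Poly_Mapping.single x (cf x) + ?w)"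
      using insert assms(3) by auto
    moreover have "Poly_Mapping.keys (Poly_Mapping.single x (cf x) + ?w) \<subseteq> K"
    proof -
      have "Poly_Mapping.keys (Poly_Mapping.single x (cf x)) \<subseteq> {x}" by simp
      then show ?thesis using insert keys_add[of "Poly_Mapping.single x (cf x)" ?w] by blast
    qed
    ultimately show ?case using insert by simp
  qed (simp add: assms(2))
  from this[of "Poly_Mapping.keys v" "Poly_Mapping.lookup v"] assms(1)
  show ?thesis by (simp flip: poly_mapping_sum_singles)
qed

context vspace
begin

lemma lincomb_minus: "(\<And>p. g p \<in> vcarr V) \<Longrightarrow> lincomb g (- v) = vsmult V (-1) (lincomb g v)"
  by (metis lincomb_psm psm_minus_one)

lemma lincomb_diff:
  "(\<And>p. g p \<in> vcarr V) \<Longrightarrow> lincomb g (v - w) = vadd V (lincomb g v) (vsmult V (-1) (lincomb g w))"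
  by (metis lincomb_add lincomb_minus diff_conv_add_uminus)

lemma lincomb_gen: "(\<And>p. g p \<in> vcarr V) \<Longrightarrow> lincomb g (gen a b) = g (a, b)"
  by (simp add: gen_def lincomb_single)

lemma lincomb_pmlin:
  assumes "\<And>p. g p \<in> vcarr V"
  shows "lincomb g (pmlin h v) = lincomb (\<lambda>p. lincomb g (h p)) v"
proof -
  have "lincomb g (pmlin h v)
      = lsum V (\<lambda>p. lincomb g (psm (Poly_Mapping.lookup v p) (h p))) (Poly_Mapping.keys v)"
    using assms by (simp add: pmlin_def lincomb_sum)
  also have "\<dots> = lincomb (\<lambda>p. lincomb g (h p)) v"
    unfolding lincomb_def[of "\<lambda>p. lincomb g (h p)"] by (rule lsum_cong) (simp add: lincomb_psm assms)
  finally show ?thesis .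
qed

end

lemma pmlin_pmlin: "pmlin g (pmlin h v) = pmlin (\<lambda>p. pmlin g (h p)) v"
  using free.lincomb_pmlin[of g h v] by (simp add: pmlin_eq_lincomb)

lemma pmlin_in_pspan:
  assumes "\<And>p. p \<in> Poly_Mapping.keys v \<Longrightarrow> h p \<in> pspan G"
  shows "pmlin h v \<in> pspan G"
proof -
  have "(\<Sum>p\<in>S. psm (Poly_Mapping.lookup v p) (h p)) \<in> pspan G"
    if "finite S" "S \<subseteq> Poly_Mapping.keys v" for S
    using that by (induction S rule: finite_induct) (auto intro!: pspan_add pspan_smult pspan_zero assms)
  then show ?thesis by (simp add: pmlin_def)
qed

lemma pspan_minus: "v \<in> pspan G \<Longrightarrow> - v \<in> pspan G"
  by (metis pspan_smult psm_minus_one)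
lemma pspan_diff: "v \<in> pspan G \<Longrightarrow> w \<in> pspan G \<Longrightarrow> v - w \<in> pspan G"
  by (metis diff_conv_add_uminus pspan_add pspan_minus)

lemma keys_gen: "Poly_Mapping.keys (gen a b :: _ \<Rightarrow>\<^sub>0 'k::field) = {(a, b)}"
  by (simp add: gen_def)

lemma free_on_add: "v \<in> free_on A \<Longrightarrow> w \<in> free_on A \<Longrightarrow> v + w \<in> free_on A"
  using keys_add[of v w] by (auto simp: free_on_def)
lemma free_on_psm: "v \<in> free_on A \<Longrightarrow> psm c v \<in> free_on A"
  using keys_psm[of c v] by (auto simp: free_on_def)
lemma free_on_minus: "v \<in> free_on A \<Longrightarrow> - v \<in> free_on A"
  by (simp add: free_on_def)
lemma free_on_diff: "v \<in> free_on A \<Longrightarrow> w \<in> free_on A \<Longrightarrow> v - w \<in> free_on A"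
  by (metis diff_conv_add_uminus free_on_add free_on_minus)
lemma free_on_zero [simp]: "0 \<in> free_on A"
  by (simp add: free_on_def)
lemma free_on_gen: "a \<in> A \<Longrightarrow> b \<in> A \<Longrightarrow> gen a b \<in> free_on A"
  by (simp add: free_on_def keys_gen)
lemma free_on_keys: "v \<in> free_on A \<Longrightarrow> p \<in> Poly_Mapping.keys v \<Longrightarrow> fst p \<in> A \<and> snd p \<in> A"
  by (auto simp: free_on_def)

lemma keys_pmlin: "Poly_Mapping.keys (pmlin h v) \<subseteq> (\<Union>p\<in>Poly_Mapping.keys v. Poly_Mapping.keys (h p))"
  unfolding pmlin_def using keys_sum keys_psm by fastforce

lemma free_on_pmlin:
  assumes "\<And>p. p \<in> Poly_Mapping.keys v \<Longrightarrow> h p \<in> free_on A"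
  shows "pmlin h v \<in> free_on A"
  using keys_pmlin[of h v] assms by (fastforce simp: free_on_def)

section \<open>Linear maps\<close>

definition lin_on :: "('k, 'a, 'm) hlalg_scheme \<Rightarrow> ('k, 'b, 'n) hlalg_scheme \<Rightarrow> ('a \<Rightarrow> 'b) \<Rightarrow> bool" where
  "lin_on V W \<phi> \<longleftrightarrow> (\<forall>x\<in>vcarr V. \<phi> x \<in> vcarr W) \<and>
     (\<forall>x\<in>vcarr V. \<forall>y\<in>vcarr V. \<phi> (vadd V x y) = vadd W (\<phi> x) (\<phi> y)) \<and>
     (\<forall>c. \<forall>x\<in>vcarr V. \<phi> (vsmult V c x) = vsmult W c (\<phi> x))"

lemma lin_in: "lin_on V W \<phi> \<Longrightarrow> x \<in> vcarr V \<Longrightarrow> \<phi> x \<in> vcarr W"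
  by (simp add: lin_on_def)
lemma lin_add: "lin_on V W \<phi> \<Longrightarrow> x \<in> vcarr V \<Longrightarrow> y \<in> vcarr V \<Longrightarrow> \<phi> (vadd V x y) = vadd W (\<phi> x) (\<phi> y)"
  by (simp add: lin_on_def)
lemma lin_sm: "lin_on V W \<phi> \<Longrightarrow> x \<in> vcarr V \<Longrightarrow> \<phi> (vsmult V c x) = vsmult W c (\<phi> x)"
  by (simp add: lin_on_def)

lemma lin_zero:
  assumes "vspace V" "vspace W" "lin_on V W \<phi>"
  shows "\<phi> (vzero V) = vzero W"
proof -
  interpret V: vspace V by fact
  interpret W: vspace W by fact
  have "\<phi> (vzero V) = \<phi> (vsmult V 0 (vzero V))" by simp
  also have "\<dots> = vsmult W 0 (\<phi> (vzero V))" using lin_sm[OF assms(3) V.zero_in] by simp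
  also have "\<dots> = vzero W" using lin_in[OF assms(3) V.zero_in] by simp
  finally show ?thesis .
qed

lemma lin_lsum:
  assumes "vspace V" "vspace W" "lin_on V W \<phi>" "g ` S \<subseteq> vcarr V"
  shows "\<phi> (lsum V g S) = lsum W (\<lambda>x. \<phi> (g x)) S"
proof (cases "finite S")
  case True
  interpret V: vspace V by fact
  interpret W: vspace W by fact
  from True assms(4) show ?thesis
  proof (induction S rule: finite_induct)
    case empty
    then show ?case using lin_zero[OF assms(1-3)] by simp
  next
    case (insert x F)
    have gx: "g x \<in> vcarr V" "g ` F \<subseteq> vcarr V" using insert.prems by auto
    have "\<phi> (lsum V g (insert x F)) = \<phi> (vadd V (g x) (lsum V g F))"
      using V.lsum_insert[OF insert(1,2) insert.prems] by simp
    also have "\<dots> = vadd W (\<phi> (g x)) (\<phi> (lsum V g F))"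
      using lin_add[OF assms(3)] gx V.lsum_in[OF gx(2)] by simp
    also have "\<dots> = lsum W (\<lambda>x. \<phi> (g x)) (insert x F)"
      using insert gx lin_in[OF assms(3)]
      by (subst W.lsum_insert) (auto simp: image_subset_iff)
    finally show ?case .
  qed
next
  case False
  then show ?thesis using lin_zero[OF assms(1-3)] by (simp add: lsum_def)
qed

lemma lin_lincomb:
  assumes "vspace V" "vspace W" "lin_on V W \<phi>" "\<And>p. g p \<in> vcarr V"
  shows "\<phi> (vspace.lincomb V g v) = vspace.lincomb W (\<lambda>p. \<phi> (g p)) v"
proof -
  interpret V: vspace V by fact
  interpret W: vspace W by fact
  have "\<phi> (V.lincomb g v)
      = lsum W (\<lambda>p. \<phi> (vsmult V (Poly_Mapping.lookup v p) (g p))) (Poly_Mapping.keys v)"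
    unfolding V.lincomb_def using assms by (intro lin_lsum) auto
  also have "\<dots> = W.lincomb (\<lambda>p. \<phi> (g p)) v"
    unfolding W.lincomb_def by (rule W.lsum_cong) (simp add: lin_sm[OF assms(3)] assms(4))
  finally show ?thesis .
qed

lemma lspan_subset:
  assumes "vspace V" "G \<subseteq> vcarr V"
  shows "lspan V G \<subseteq> vcarr V"
proof
  fix x assume "x \<in> lspan V G"
  then show "x \<in> vcarr V"
    by (induction rule: lspan.induct) (use assms in \<open>auto simp: vspace.zero_in vspace.add_in vspace.sm_in\<close>)
qed

lemma lin_eq_on_lspan:
  assumes "vspace V" "vspace W" "lin_on V W \<phi>" "lin_on V W \<psi>" "G \<subseteq> vcarr V"
    "\<And>g. g \<in> G \<Longrightarrow> \<phi> g = \<psi> g" "x \<in> lspan V G"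
  shows "\<phi> x = \<psi> x"
  using assms(7)
proof (induction rule: lspan.induct)
  case lspan_zero
  then show ?case using lin_zero assms by metis
next
  case (lspan_gen g)
  then show ?case using assms by simp
next
  case (lspan_add x y)
  have "x \<in> vcarr V" "y \<in> vcarr V" using lspan_add lspan_subset[OF assms(1,5)] by auto
  then show ?case using lspan_add lin_add[OF assms(3)] lin_add[OF assms(4)] by simp
next
  case (lspan_smult x c)
  have "x \<in> vcarr V" using lspan_smult lspan_subset[OF assms(1,5)] by auto
  then show ?case using lspan_smult lin_sm[OF assms(3)] lin_sm[OF assms(4)] by simp
qed

lemma lin_image_lspan:
  assumes "vspace V" "vspace W" "lin_on V W \<phi>" "G \<subseteq> vcarr V" "\<phi> ` G \<subseteq> H" "x \<in> lspan V G"
  shows "\<phi> x \<in> lspan W H"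
  using assms(6)
proof (induction rule: lspan.induct)
  case lspan_zero
  then show ?case by (simp add: lin_zero[OF assms(1-3)] lspan.lspan_zero)
next
  case (lspan_gen g)
  then show ?case using assms(5) by (auto intro: lspan.lspan_gen)
next
  case (lspan_add x y)
  have "x \<in> vcarr V" "y \<in> vcarr V" using lspan_add(1,2) lspan_subset[OF assms(1,4)] by auto
  then show ?case using lspan_add by (simp add: lin_add[OF assms(3)] lspan.lspan_add)
next
  case (lspan_smult x c)
  have "x \<in> vcarr V" using lspan_smult(1) lspan_subset[OF assms(1,4)] by auto
  then show ?case using lspan_smult by (simp add: lin_sm[OF assms(3)] lspan.lspan_smult)
qed

section \<open>Hom-Leibniz algebras and their derivations\<close>

locale hl = vspace V for V :: "('k::field, 'a, 'm) hlalg_scheme" +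
  assumes hom_leibniz: "hom_leibniz V"
begin

lemma br_in [simp]: "x \<in> vcarr V \<Longrightarrow> y \<in> vcarr V \<Longrightarrow> vbr V x y \<in> vcarr V"
  using hom_leibniz unfolding hom_leibniz_def by (elim conjE) blast
lemma alpha_in [simp]: "x \<in> vcarr V \<Longrightarrow> valpha V x \<in> vcarr V"
  using hom_leibniz unfolding hom_leibniz_def by (elim conjE) blast
lemma br_add_left: "x \<in> vcarr V \<Longrightarrow> y \<in> vcarr V \<Longrightarrow> z \<in> vcarr V \<Longrightarrow>
    vbr V (vadd V x y) z = vadd V (vbr V x z) (vbr V y z)"
  using hom_leibniz unfolding hom_leibniz_def by (elim conjE) blast
lemma br_add_right: "x \<in> vcarr V \<Longrightarrow> y \<in> vcarr V \<Longrightarrow> z \<in> vcarr V \<Longrightarrow>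
    vbr V x (vadd V y z) = vadd V (vbr V x y) (vbr V x z)"
  using hom_leibniz unfolding hom_leibniz_def by (elim conjE) blast
lemma br_sm_left: "x \<in> vcarr V \<Longrightarrow> y \<in> vcarr V \<Longrightarrow> vbr V (vsmult V c x) y = vsmult V c (vbr V x y)"
  using hom_leibniz unfolding hom_leibniz_def by (elim conjE) blast
lemma br_sm_right: "x \<in> vcarr V \<Longrightarrow> y \<in> vcarr V \<Longrightarrow> vbr V x (vsmult V c y) = vsmult V c (vbr V x y)"
  using hom_leibniz unfolding hom_leibniz_def by (elim conjE) blast
lemma alpha_add: "x \<in> vcarr V \<Longrightarrow> y \<in> vcarr V \<Longrightarrow> valpha V (vadd V x y) = vadd V (valpha V x) (valpha V y)"
  using hom_leibniz unfolding hom_leibniz_def by (elim conjE) blast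
lemma alpha_sm: "x \<in> vcarr V \<Longrightarrow> valpha V (vsmult V c x) = vsmult V c (valpha V x)"
  using hom_leibniz unfolding hom_leibniz_def by (elim conjE) blast
lemma leibniz: "x \<in> vcarr V \<Longrightarrow> y \<in> vcarr V \<Longrightarrow> z \<in> vcarr V \<Longrightarrow>
    vbr V (valpha V x) (vbr V y z) =
    vadd V (vbr V (vbr V x y) (valpha V z)) (vsmult V (-1) (vbr V (vbr V x z) (valpha V y)))"
  using hom_leibniz unfolding hom_leibniz_def by (elim conjE) (simp only: Ball_def)
lemma alpha_br: "x \<in> vcarr V \<Longrightarrow> y \<in> vcarr V \<Longrightarrow> valpha V (vbr V x y) = vbr V (valpha V x) (valpha V y)"
  using hom_leibniz unfolding hom_leibniz_def by (elim conjE) (simp only: Ball_def)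

lemma alpha_zero [simp]: "valpha V (vzero V) = vzero V"
  using alpha_sm[of "vzero V" 0] by simp

lemma lin_alpha: "lin_on V V (valpha V)"
  by (simp add: lin_on_def alpha_add alpha_sm)

end

lemma Der_in: "d \<in> Der L \<Longrightarrow> x \<in> vcarr L \<Longrightarrow> d x \<in> vcarr L"
  by (simp add: Der_def)
lemma Der_add: "d \<in> Der L \<Longrightarrow> x \<in> vcarr L \<Longrightarrow> y \<in> vcarr L \<Longrightarrow> d (vadd L x y) = vadd L (d x) (d y)"
  by (simp add: Der_def)
lemma Der_sm: "d \<in> Der L \<Longrightarrow> x \<in> vcarr L \<Longrightarrow> d (vsmult L c x) = vsmult L c (d x)"
  by (simp add: Der_def)
lemma Der_br: "d \<in> Der L \<Longrightarrow> x \<in> vcarr L \<Longrightarrow> y \<in> vcarr L \<Longrightarrow>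
    d (vbr L x y) = vadd L (vbr L (valpha L x) (d y)) (vbr L (d x) (valpha L y))"
  by (simp add: Der_def)
lemma Der_alpha: "d \<in> Der L \<Longrightarrow> x \<in> vcarr L \<Longrightarrow> d (valpha L x) = valpha L (d x)"
  by (simp add: Der_def)
lemma Der_lin: "d \<in> Der L \<Longrightarrow> lin_on L L d"
  by (simp add: Der_def lin_on_def)
lemma Der_eqI: "d1 \<in> Der L \<Longrightarrow> d2 \<in> Der L \<Longrightarrow> (\<And>x. x \<in> vcarr L \<Longrightarrow> d1 x = d2 x) \<Longrightarrow> d1 = d2"
  by (rule extensionalityI[of _ "vcarr L"]) (simp_all add: Der_def)

lemma DerI:
  assumes "d \<in> extensional (vcarr L)" "\<And>x. x \<in> vcarr L \<Longrightarrow> d x \<in> vcarr L"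
    "\<And>x y. x \<in> vcarr L \<Longrightarrow> y \<in> vcarr L \<Longrightarrow> d (vadd L x y) = vadd L (d x) (d y)"
    "\<And>c x. x \<in> vcarr L \<Longrightarrow> d (vsmult L c x) = vsmult L c (d x)"
    "\<And>x y. x \<in> vcarr L \<Longrightarrow> y \<in> vcarr L \<Longrightarrow>
       d (vbr L x y) = vadd L (vbr L (valpha L x) (d y)) (vbr L (d x) (valpha L y))"
    "\<And>x. x \<in> vcarr L \<Longrightarrow> d (valpha L x) = valpha L (d x)"
  shows "d \<in> Der L"
  using assms by (simp add: Der_def)

context hl
begin

lemma Der_zero: "d \<in> Der V \<Longrightarrow> d (vzero V) = vzero V"
  using lin_zero[OF vspace_axioms vspace_axioms Der_lin] by blast

lemma Der_der_add:
  assumes "d1 \<in> Der V" "d2 \<in> Der V"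
  shows "der_add V d1 d2 \<in> Der V"
proof (rule DerI)
  show "der_add V d1 d2 \<in> extensional (vcarr V)" by (simp add: der_add_def)
next
  fix x assume x: "x \<in> vcarr V"
  then show "der_add V d1 d2 x \<in> vcarr V" using assms by (simp add: der_add_def Der_in)
  show "der_add V d1 d2 (vsmult V c x) = vsmult V c (der_add V d1 d2 x)" for c
    using assms x by (simp add: der_add_def Der_in Der_sm sm_add)
  show "der_add V d1 d2 (valpha V x) = valpha V (der_add V d1 d2 x)"
    using assms x by (simp add: der_add_def Der_in Der_alpha alpha_add)
next
  fix x y assume x: "x \<in> vcarr V" and y: "y \<in> vcarr V"
  show "der_add V d1 d2 (vadd V x y) = vadd V (der_add V d1 d2 x) (der_add V d1 d2 y)"
    using assms x y by (simp add: der_add_def Der_in Der_add add_swap4)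
  show "der_add V d1 d2 (vbr V x y) =
      vadd V (vbr V (valpha V x) (der_add V d1 d2 y)) (vbr V (der_add V d1 d2 x) (valpha V y))"
    using assms x y by (simp add: der_add_def Der_in Der_br br_add_left br_add_right add_swap4)
qed

lemma Der_der_smult:
  assumes "d \<in> Der V"
  shows "der_smult V c d \<in> Der V"
proof (rule DerI)
  show "der_smult V c d \<in> extensional (vcarr V)" by (simp add: der_smult_def)
next
  fix x assume x: "x \<in> vcarr V"
  then show "der_smult V c d x \<in> vcarr V" using assms by (simp add: der_smult_def Der_in)
  show "der_smult V c d (vsmult V e x) = vsmult V e (der_smult V c d x)" for e
    using assms x by (simp add: der_smult_def Der_in Der_sm sm_sm[symmetric] mult.commute)
  show "der_smult V c d (valpha V x) = valpha V (der_smult V c d x)"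
    using assms x by (simp add: der_smult_def Der_in Der_alpha alpha_sm)
next
  fix x y assume x: "x \<in> vcarr V" and y: "y \<in> vcarr V"
  show "der_smult V c d (vadd V x y) = vadd V (der_smult V c d x) (der_smult V c d y)"
    using assms x y by (simp add: der_smult_def Der_in Der_add sm_add)
  show "der_smult V c d (vbr V x y) =
      vadd V (vbr V (valpha V x) (der_smult V c d y)) (vbr V (der_smult V c d x) (valpha V y))"
    using assms x y by (simp add: der_smult_def Der_in Der_br br_sm_left br_sm_right sm_add)
qed

end

section \<open>Descent of derivations along surjective homomorphisms\<close>

lemma hl_homD:
  assumes "hl_hom K L f"
  shows "x \<in> vcarr K \<Longrightarrow> f x \<in> vcarr L"
    and "x \<in> vcarr K \<Longrightarrow> y \<in> vcarr K \<Longrightarrow> f (vadd K x y) = vadd L (f x) (f y)"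
    and "x \<in> vcarr K \<Longrightarrow> f (vsmult K c x) = vsmult L c (f x)"
    and "x \<in> vcarr K \<Longrightarrow> y \<in> vcarr K \<Longrightarrow> f (vbr K x y) = vbr L (f x) (f y)"
    and "x \<in> vcarr K \<Longrightarrow> f (valpha K x) = valpha L (f x)"
  using assms by (simp_all add: hl_hom_def)

lemma Der_fibre_eq:
  assumes "vspace K" "vspace L" "hl_hom K L f"
    and \<rho>: "\<rho> \<in> Der K" "\<rho> ` hl_ker K L f \<subseteq> hl_ker K L f"
    and x: "x \<in> vcarr K" "x' \<in> vcarr K" "f x = f x'"
  shows "f (\<rho> x) = f (\<rho> x')"
proof -
  interpret K: vspace K by fact
  interpret L: vspace L by fact
  note f = hl_homD[OF assms(3)]
  let ?k = "vadd K x (vsmult K (-1) x')"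
  have "?k \<in> hl_ker K L f" using x by (simp add: hl_ker_def f)
  then have fk: "f (\<rho> ?k) = vzero L" using \<rho>(2) by (auto simp: hl_ker_def)
  have "\<rho> x = \<rho> (vadd K x' ?k)"
    using K.add_diff_cancel[OF x(1,2)] by simp
  then have "f (\<rho> x) = f (vadd K (\<rho> x') (\<rho> ?k))"
    using Der_add[OF \<rho>(1) x(2), of ?k] x by simp
  also have "\<dots> = f (\<rho> x')" using fk \<rho>(1) x by (simp add: f Der_in)
  finally show ?thesis .
qed

lemma Der_descends:
  assumes "vspace K" "vspace L" "hl_hom K L f" "f ` vcarr K = vcarr L"
    and closed: "\<And>x y. x \<in> vcarr K \<Longrightarrow> y \<in> vcarr K \<Longrightarrow> vbr K x y \<in> vcarr K"
      "\<And>x. x \<in> vcarr K \<Longrightarrow> valpha K x \<in> vcarr K"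
    and \<rho>: "\<rho> \<in> Der K" "\<rho> ` hl_ker K L f \<subseteq> hl_ker K L f"
  shows "\<exists>d\<in>Der L. \<forall>x\<in>vcarr K. f (\<rho> x) = d (f x)"
proof -
  note f = hl_homD[OF assms(3)]
  define d where "d = (\<lambda>y\<in>vcarr L. f (\<rho> (SOME x. x \<in> vcarr K \<and> f x = y)))"
  have comm: "d (f x) = f (\<rho> x)" if x: "x \<in> vcarr K" for x
  proof -
    define x' where "x' = (SOME x'. x' \<in> vcarr K \<and> f x' = f x)"
    have x': "x' \<in> vcarr K \<and> f x' = f x"
      unfolding x'_def by (rule someI_ex) (use x in blast)
    have "d (f x) = f (\<rho> x')" using x by (simp add: d_def x'_def f)
    also have "\<dots> = f (\<rho> x)" using Der_fibre_eq[OF assms(1-3) \<rho>] x x' by blast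
    finally show ?thesis .
  qed
  have pre: "\<And>y. y \<in> vcarr L \<Longrightarrow> \<exists>x\<in>vcarr K. y = f x"
    using assms(4) by auto
  have "d \<in> Der L"
  proof (rule DerI)
    show "d \<in> extensional (vcarr L)" by (simp add: d_def)
  next
    fix y assume "y \<in> vcarr L"
    then obtain x where x: "x \<in> vcarr K" "y = f x" using pre by blast
    show "d y \<in> vcarr L" using x comm \<rho> by (simp add: Der_in f)
    show "d (vsmult L c y) = vsmult L c (d y)" for c
      using x \<rho> comm[of x] comm[of "vsmult K c x"] assms(1) by (simp add: vspace.sm_in Der_sm Der_in f)
    show "d (valpha L y) = valpha L (d y)"
      using x \<rho> comm[of x] comm[of "valpha K x"] by (simp add: closed Der_alpha Der_in f)
  next
    fix y y' assume "y \<in> vcarr L" "y' \<in> vcarr L"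
    then obtain x x' where x: "x \<in> vcarr K" "y = f x" and x': "x' \<in> vcarr K" "y' = f x'"
      using pre by metis
    show "d (vadd L y y') = vadd L (d y) (d y')"
      using x x' \<rho> comm[of x] comm[of x'] comm[of "vadd K x x'"] assms(1)
      by (simp add: vspace.add_in Der_add Der_in f)
    show "d (vbr L y y') = vadd L (vbr L (valpha L y) (d y')) (vbr L (d y) (valpha L y'))"
      using x x' \<rho> comm[of x] comm[of x'] comm[of "vbr K x x'"]
      by (simp add: closed Der_br Der_in f)
  qed
  then show ?thesis by (intro bexI[of _ d] ballI) (simp_all add: comm)
qed

section \<open>Classes modulo the defining relations of \<open>uce\<^sub>\<alpha>\<close>\<close>

lemma uce_rel_zero [simp]: "0 \<in> uce_rel L"
  by (simp add: uce_rel_def pspan.pspan_zero)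
lemma uce_rel_add: "v \<in> uce_rel L \<Longrightarrow> w \<in> uce_rel L \<Longrightarrow> v + w \<in> uce_rel L"
  by (simp add: uce_rel_def pspan.pspan_add)
lemma uce_rel_psm: "v \<in> uce_rel L \<Longrightarrow> psm c v \<in> uce_rel L"
  by (simp add: uce_rel_def pspan.pspan_smult)
lemma uce_rel_minus: "v \<in> uce_rel L \<Longrightarrow> - v \<in> uce_rel L"
  by (simp add: uce_rel_def pspan_minus)
lemma uce_rel_diff: "v \<in> uce_rel L \<Longrightarrow> w \<in> uce_rel L \<Longrightarrow> v - w \<in> uce_rel L"
  by (simp add: uce_rel_def pspan_diff)

lemma pmlin_in_uce_rel:
  "(\<And>p. p \<in> Poly_Mapping.keys v \<Longrightarrow> h p \<in> uce_rel L) \<Longrightarrow> pmlin h v \<in> uce_rel L"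
  unfolding uce_rel_def by (rule pmlin_in_pspan)

lemma ucls_eqI:
  assumes "v - w \<in> uce_rel L"
  shows "ucls L v = ucls L w"
proof -
  have sub: "ucls L v \<subseteq> ucls L w" if "v - w \<in> uce_rel L" for v w
  proof
    fix x assume "x \<in> ucls L v"
    then obtain r where r: "r \<in> uce_rel L" "x = v + r" by (auto simp: ucls_def)
    have "(v - w) + r \<in> uce_rel L" using that r by (simp add: uce_rel_add)
    then show "x \<in> ucls L w" unfolding ucls_def using r
      by (intro image_eqI[of _ _ "(v - w) + r"]) auto
  qed
  have "w - v \<in> uce_rel L" using uce_rel_minus[OF assms] by simp
  then show ?thesis using sub assms by blast
qed

lemma self_in_ucls: "v \<in> ucls L v"
  unfolding ucls_def by (rule image_eqI[of _ _ 0]) auto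

lemma ucls_eqD:
  assumes "ucls L v = ucls L w"
  shows "v - w \<in> uce_rel L"
proof -
  have "v \<in> ucls L w" using assms self_in_ucls by metis
  then obtain r where "r \<in> uce_rel L" "v = w + r" by (auto simp: ucls_def)
  then show ?thesis by simp
qed

lemma urep_diff: "urep (ucls L v) - v \<in> uce_rel L"
proof -
  have "urep (ucls L v) \<in> ucls L v"
    unfolding urep_def by (rule someI[of _ v]) (rule self_in_ucls)
  then show ?thesis by (auto simp: ucls_def)
qed

lemma uce_add: "vadd (uce L) (ucls L v) (ucls L w) = ucls L (v + w)"
proof -
  have "(urep (ucls L v) + urep (ucls L w)) - (v + w) =
        (urep (ucls L v) - v) + (urep (ucls L w) - w)" by simp
  then show ?thesis unfolding uce_def
    by (simp, intro ucls_eqI) (metis uce_rel_add urep_diff)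
qed

lemma uce_sm: "vsmult (uce L) c (ucls L v) = ucls L (psm c v)"
proof -
  have "psm c (urep (ucls L v)) - psm c v = psm c (urep (ucls L v) - v)" by (simp add: psm_diff)
  then show ?thesis unfolding uce_def
    by (simp, intro ucls_eqI) (metis uce_rel_psm urep_diff)
qed

lemma ucls_pmlin_urep:
  assumes "\<And>r. r \<in> uce_rel L \<Longrightarrow> pmlin h r \<in> uce_rel L'"
  shows "ucls L' (pmlin h (urep (ucls L v))) = ucls L' (pmlin h v)"
  by (rule ucls_eqI) (metis assms pmlin_diff urep_diff)

section \<open>\<open>\<alpha>\<close>-perfect Hom-Leibniz algebras\<close>

locale perfect_hl = hl V for V :: "('k::field, 'a, 'm) hlalg_scheme" +
  assumes perfect: "alpha_perfect V"
begin

definition alpha_brackets :: "'a set" where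
  "alpha_brackets = {vbr V (valpha V x) (valpha V y) | x y. x \<in> vcarr V \<and> y \<in> vcarr V}"

lemma carr_eq_lspan: "vcarr V = lspan V alpha_brackets"
  using perfect by (simp add: alpha_perfect_def alpha_brackets_def)

lemma alpha_brackets_subset: "alpha_brackets \<subseteq> vcarr V"
  by (auto simp: alpha_brackets_def)

lemma alpha_surj: "valpha V ` vcarr V = vcarr V"
proof
  show "valpha V ` vcarr V \<subseteq> vcarr V" by auto
  have "x \<in> valpha V ` vcarr V" if "x \<in> lspan V alpha_brackets" for x
    using that
  proof (induction rule: lspan.induct)
    case lspan_zero
    then show ?case by (metis alpha_zero image_eqI zero_in)
  next
    case (lspan_gen g)
    then obtain x y where "x \<in> vcarr V" "y \<in> vcarr V" "g = vbr V (valpha V x) (valpha V y)"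
      by (auto simp: alpha_brackets_def)
    then show ?case by (metis alpha_br br_in image_eqI)
  next
    case (lspan_add x y)
    then obtain a b where "a \<in> vcarr V" "b \<in> vcarr V" "x = valpha V a" "y = valpha V b" by auto
    then show ?case by (metis alpha_add add_in image_eqI)
  next
    case (lspan_smult x c)
    then obtain a where "a \<in> vcarr V" "x = valpha V a" by auto
    then show ?case by (metis alpha_sm sm_in image_eqI)
  qed
  then show "vcarr V \<subseteq> valpha V ` vcarr V" using carr_eq_lspan by auto
qed

text \<open>Since \<open>\<alpha>\<close> is onto, \<open>\<alpha>(L) \<otimes> \<alpha>(L)\<close> is spanned by all pairs of elements of \<open>L\<close>; this removes
  \<open>\<alpha>\<close> from the generators of the relation and from the carrier of \<open>uce\<^sub>\<alpha>(L)\<close>.\<close>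

lemma uce_carr: "vcarr (uce V) = ucls V ` free_on (vcarr V)"
  by (simp add: uce_def alpha_surj)

lemma tensor_rels_cases:
  assumes "g \<in> tensor_rels V"
  obtains (add_left) a a' b where "a \<in> vcarr V" "a' \<in> vcarr V" "b \<in> vcarr V"
      "g = gen (vadd V a a') b - gen a b - gen a' b"
    | (add_right) a b b' where "a \<in> vcarr V" "b \<in> vcarr V" "b' \<in> vcarr V"
      "g = gen a (vadd V b b') - gen a b - gen a b'"
    | (smult_left) c a b where "a \<in> vcarr V" "b \<in> vcarr V" "g = gen (vsmult V c a) b - psm c (gen a b)"
    | (smult_right) c a b where "a \<in> vcarr V" "b \<in> vcarr V" "g = gen a (vsmult V c b) - psm c (gen a b)"
  using assms unfolding tensor_rels_def Let_def alpha_surj by blast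

lemma I_gens_cases:
  assumes "g \<in> I_gens V"
  obtains x1 x2 x3 where "x1 \<in> vcarr V" "x2 \<in> vcarr V" "x3 \<in> vcarr V"
    "g = - gen (vbr V x1 x2) (valpha V x3) + gen (vbr V x1 x3) (valpha V x2)
         + gen (valpha V x1) (vbr V x2 x3)"
  using assms unfolding I_gens_def by blast

lemma uce_rel_add_left:
  "a \<in> vcarr V \<Longrightarrow> a' \<in> vcarr V \<Longrightarrow> b \<in> vcarr V \<Longrightarrow> gen (vadd V a a') b - gen a b - gen a' b \<in> uce_rel V"
  unfolding uce_rel_def tensor_rels_def Let_def alpha_surj by (rule pspan_gen) blast
lemma uce_rel_add_right:
  "a \<in> vcarr V \<Longrightarrow> b \<in> vcarr V \<Longrightarrow> b' \<in> vcarr V \<Longrightarrow> gen a (vadd V b b') - gen a b - gen a b' \<in> uce_rel V"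
  unfolding uce_rel_def tensor_rels_def Let_def alpha_surj by (rule pspan_gen) blast
lemma uce_rel_smult_left:
  "a \<in> vcarr V \<Longrightarrow> b \<in> vcarr V \<Longrightarrow> gen (vsmult V c a) b - psm c (gen a b) \<in> uce_rel V"
  unfolding uce_rel_def tensor_rels_def Let_def alpha_surj by (rule pspan_gen) blast
lemma uce_rel_smult_right:
  "a \<in> vcarr V \<Longrightarrow> b \<in> vcarr V \<Longrightarrow> gen a (vsmult V c b) - psm c (gen a b) \<in> uce_rel V"
  unfolding uce_rel_def tensor_rels_def Let_def alpha_surj by (rule pspan_gen) blast
lemma uce_rel_leibniz:
  "x1 \<in> vcarr V \<Longrightarrow> x2 \<in> vcarr V \<Longrightarrow> x3 \<in> vcarr V \<Longrightarrow>
   - gen (vbr V x1 x2) (valpha V x3) + gen (vbr V x1 x3) (valpha V x2) + gen (valpha V x1) (vbr V x2 x3)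
     \<in> uce_rel V"
  unfolding uce_rel_def I_gens_def by (rule pspan_gen) blast

lemma uce_rel_free_on: "r \<in> uce_rel V \<Longrightarrow> r \<in> free_on (vcarr V)"
  unfolding uce_rel_def
proof (induction rule: pspan.induct)
  case (pspan_gen g)
  then show ?case
  proof
    assume "g \<in> tensor_rels V"
    then show ?thesis
      by (cases rule: tensor_rels_cases) (auto intro!: free_on_diff free_on_gen free_on_psm)
  next
    assume "g \<in> I_gens V"
    then show ?thesis
      by (cases rule: I_gens_cases) (auto intro!: free_on_add free_on_minus free_on_gen free_on_diff)
  qed
qed (auto intro: free_on_add free_on_psm)

lemma urep_free_on: "v \<in> free_on (vcarr V) \<Longrightarrow> urep (ucls V v) \<in> free_on (vcarr V)"
  using urep_diff[of V v] uce_rel_free_on free_on_add by (metis diff_add_cancel)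

end

context perfect_hl
begin

lemma uce_rel_induct [consumes 1, case_names zero add smult add_left add_right smult_left smult_right leibniz]:
  assumes "r \<in> uce_rel V" "P 0" "\<And>v w. P v \<Longrightarrow> P w \<Longrightarrow> P (v + w)" "\<And>c v. P v \<Longrightarrow> P (psm c v)"
    and "\<And>a a' b. a \<in> vcarr V \<Longrightarrow> a' \<in> vcarr V \<Longrightarrow> b \<in> vcarr V \<Longrightarrow>
      P (gen (vadd V a a') b - gen a b - gen a' b)"
    and "\<And>a b b'. a \<in> vcarr V \<Longrightarrow> b \<in> vcarr V \<Longrightarrow> b' \<in> vcarr V \<Longrightarrow>
      P (gen a (vadd V b b') - gen a b - gen a b')"
    and "\<And>c a b. a \<in> vcarr V \<Longrightarrow> b \<in> vcarr V \<Longrightarrow> P (gen (vsmult V c a) b - psm c (gen a b))"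
    and "\<And>c a b. a \<in> vcarr V \<Longrightarrow> b \<in> vcarr V \<Longrightarrow> P (gen a (vsmult V c b) - psm c (gen a b))"
    and "\<And>x1 x2 x3. x1 \<in> vcarr V \<Longrightarrow> x2 \<in> vcarr V \<Longrightarrow> x3 \<in> vcarr V \<Longrightarrow>
      P (- gen (vbr V x1 x2) (valpha V x3) + gen (vbr V x1 x3) (valpha V x2) + gen (valpha V x1) (vbr V x2 x3))"
  shows "P r"
  using assms(1) unfolding uce_rel_def
proof (induction rule: pspan.induct)
  case (pspan_gen g)
  then show ?case
  proof
    assume "g \<in> tensor_rels V"
    then show ?thesis by (cases rule: tensor_rels_cases) (simp_all add: assms(5-8))
  next
    assume "g \<in> I_gens V"
    then show ?thesis by (cases rule: I_gens_cases) (simp only: assms(9))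
  qed
qed (simp_all add: assms(2-4))

lemma (in vspace) lincomb_uce_rel [consumes 2, case_names add_left add_right smult_left smult_right leibniz]:
  assumes "perfect_hl L" "r \<in> uce_rel L" "\<And>p. g p \<in> vcarr V"
    and "\<And>a a' b. a \<in> vcarr L \<Longrightarrow> a' \<in> vcarr L \<Longrightarrow> b \<in> vcarr L \<Longrightarrow>
      lincomb g (gen (vadd L a a') b - gen a b - gen a' b) = vzero V"
    and "\<And>a b b'. a \<in> vcarr L \<Longrightarrow> b \<in> vcarr L \<Longrightarrow> b' \<in> vcarr L \<Longrightarrow>
      lincomb g (gen a (vadd L b b') - gen a b - gen a b') = vzero V"
    and "\<And>c a b. a \<in> vcarr L \<Longrightarrow> b \<in> vcarr L \<Longrightarrow>
      lincomb g (gen (vsmult L c a) b - psm c (gen a b)) = vzero V"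
    and "\<And>c a b. a \<in> vcarr L \<Longrightarrow> b \<in> vcarr L \<Longrightarrow>
      lincomb g (gen a (vsmult L c b) - psm c (gen a b)) = vzero V"
    and "\<And>x1 x2 x3. x1 \<in> vcarr L \<Longrightarrow> x2 \<in> vcarr L \<Longrightarrow> x3 \<in> vcarr L \<Longrightarrow>
      lincomb g (- gen (vbr L x1 x2) (valpha L x3) + gen (vbr L x1 x3) (valpha L x2)
               + gen (valpha L x1) (vbr L x2 x3)) = vzero V"
  shows "lincomb g r = vzero V"
  by (rule perfect_hl.uce_rel_induct[OF assms(1,2)]; (simp only: assms(4-8))?)
     (simp_all add: assms(3) lincomb_add lincomb_psm)

definition pair_br :: "'a \<times> 'a \<Rightarrow> 'a" where
  "pair_br p = (if p \<in> vcarr V \<times> vcarr V then vbr V (fst p) (snd p) else vzero V)"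

definition U_free :: "('a \<times> 'a \<Rightarrow>\<^sub>0 'k) \<Rightarrow> 'a" where
  "U_free v = lincomb pair_br v"

lemma pair_br_in [simp]: "pair_br p \<in> vcarr V"
  by (auto simp: pair_br_def)
lemma U_free_in [simp]: "U_free v \<in> vcarr V"
  by (simp add: U_free_def)
lemma U_free_zero [simp]: "U_free 0 = vzero V"
  by (simp add: U_free_def)
lemma U_free_add: "U_free (v + w) = vadd V (U_free v) (U_free w)"
  by (simp add: U_free_def lincomb_add)
lemma U_free_psm: "U_free (psm c v) = vsmult V c (U_free v)"
  by (simp add: U_free_def lincomb_psm)
lemma U_free_diff: "U_free (v - w) = vadd V (U_free v) (vsmult V (-1) (U_free w))"
  by (simp add: U_free_def lincomb_diff)
lemma U_free_gen: "a \<in> vcarr V \<Longrightarrow> b \<in> vcarr V \<Longrightarrow> U_free (gen a b) = vbr V a b"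
  by (simp add: U_free_def lincomb_gen[OF pair_br_in] pair_br_def)
lemma U_free_single:
  "p \<in> vcarr V \<times> vcarr V \<Longrightarrow> U_free (Poly_Mapping.single p c) = vsmult V c (vbr V (fst p) (snd p))"
  by (simp add: U_free_def lincomb_single[OF pair_br_in] pair_br_def)

lemma U_free_uce_rel: "r \<in> uce_rel V \<Longrightarrow> U_free r = vzero V"
  unfolding U_free_def
  using lincomb_uce_rel[OF perfect_hl_axioms _ pair_br_in]
  by (simp add: U_free_diff[unfolded U_free_def] U_free_gen[unfolded U_free_def] U_free_add[unfolded U_free_def]
      U_free_psm[unfolded U_free_def] br_add_left br_add_right br_sm_left br_sm_right leibniz
      add_minus_summands add_minus_swap)

lemma U_free_urep: "U_free (urep (ucls V v)) = U_free v"
proof -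
  have "U_free (urep (ucls V v)) = U_free (v + (urep (ucls V v) - v))" by simp
  also have "\<dots> = vadd V (U_free v) (U_free (urep (ucls V v) - v))" by (rule U_free_add)
  also have "\<dots> = U_free v" using U_free_uce_rel[OF urep_diff] by simp
  finally show ?thesis .
qed

lemma uceU_ucls:
  assumes "v \<in> free_on (vcarr V)"
  shows "uceU V (ucls V v) = U_free v"
proof -
  have "uceU V (ucls V v) = U_free (urep (ucls V v))"
    using urep_free_on[OF assms] unfolding uceU_def Let_def U_free_def lincomb_def
    by (intro lsum_cong) (auto simp: pair_br_def free_on_def)
  then show ?thesis by (simp add: U_free_urep)
qed

lemma U_free_surj:
  assumes "x \<in> vcarr V"
  shows "\<exists>v\<in>free_on (vcarr V). U_free v = x"
proof -
  have "x \<in> lspan V alpha_brackets" using assms carr_eq_lspan by simp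
  then show ?thesis
  proof (induction rule: lspan.induct)
    case lspan_zero
    then show ?case by (intro bexI[of _ 0]) auto
  next
    case (lspan_gen g)
    then obtain x y where "x \<in> vcarr V" "y \<in> vcarr V" "g = vbr V (valpha V x) (valpha V y)"
      by (auto simp: alpha_brackets_def)
    then show ?case
      by (intro bexI[of _ "gen (valpha V x) (valpha V y)"]) (auto simp: U_free_gen free_on_gen)
  next
    case (lspan_add x y)
    then obtain v w where "v \<in> free_on (vcarr V)" "w \<in> free_on (vcarr V)" "U_free v = x" "U_free w = y"
      by auto
    then show ?case by (intro bexI[of _ "v + w"]) (auto simp: U_free_add free_on_add)
  next
    case (lspan_smult x c)
    then obtain v where "v \<in> free_on (vcarr V)" "U_free v = x" by auto
    then show ?case by (intro bexI[of _ "psm c v"]) (auto simp: U_free_psm free_on_psm)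
  qed
qed

end

context perfect_hl
begin

definition der_pair :: "('a \<Rightarrow> 'a) \<Rightarrow> 'a \<times> 'a \<Rightarrow> ('a \<times> 'a \<Rightarrow>\<^sub>0 'k)" where
  "der_pair d p = gen (d (fst p)) (valpha V (snd p)) + gen (valpha V (fst p)) (d (snd p))"

definition der_free :: "('a \<Rightarrow> 'a) \<Rightarrow> ('a \<times> 'a \<Rightarrow>\<^sub>0 'k) \<Rightarrow> ('a \<times> 'a \<Rightarrow>\<^sub>0 'k)" where
  "der_free d v = pmlin (der_pair d) v"

definition alpha_pair :: "'a \<times> 'a \<Rightarrow> ('a \<times> 'a \<Rightarrow>\<^sub>0 'k)" where
  "alpha_pair p = gen (valpha V (fst p)) (valpha V (snd p))"

definition alpha_free :: "('a \<times> 'a \<Rightarrow>\<^sub>0 'k) \<Rightarrow> ('a \<times> 'a \<Rightarrow>\<^sub>0 'k)" where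
  "alpha_free v = pmlin alpha_pair v"

lemma der_free_gen: "der_free d (gen a b) = gen (d a) (valpha V b) + gen (valpha V a) (d b)"
  by (simp add: der_free_def der_pair_def)

text \<open>Applying a derivation to a Leibniz generator gives the three Leibniz generators with one
  argument differentiated, up to the bilinearity relations \<open>T\<^sub>1, T\<^sub>2, T\<^sub>3\<close>.\<close>

lemma der_free_leibniz_rel:
  assumes d: "d \<in> Der V" and x: "x1 \<in> vcarr V" "x2 \<in> vcarr V" "x3 \<in> vcarr V"
  shows "der_free d (- gen (vbr V x1 x2) (valpha V x3) + gen (vbr V x1 x3) (valpha V x2)
           + gen (valpha V x1) (vbr V x2 x3)) \<in> uce_rel V"
proof -
  have dx: "d x1 \<in> vcarr V" "d x2 \<in> vcarr V" "d x3 \<in> vcarr V" using x d by (auto simp: Der_in)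
  let ?b = "vbr V" and ?a = "valpha V"
  let ?I1 = "- gen (?b (d x1) (?a x2)) (?a (?a x3)) + gen (?b (d x1) (?a x3)) (?a (?a x2))
             + gen (?a (d x1)) (?b (?a x2) (?a x3))"
  let ?I2 = "- gen (?b (?a x1) (d x2)) (?a (?a x3)) + gen (?b (?a x1) (?a x3)) (?a (d x2))
             + gen (?a (?a x1)) (?b (d x2) (?a x3))"
  let ?I3 = "- gen (?b (?a x1) (?a x2)) (?a (d x3)) + gen (?b (?a x1) (d x3)) (?a (?a x2))
             + gen (?a (?a x1)) (?b (?a x2) (d x3))"
  let ?T1 = "gen (vadd V (?b (?a x1) (d x2)) (?b (d x1) (?a x2))) (?a (?a x3))
             - gen (?b (?a x1) (d x2)) (?a (?a x3)) - gen (?b (d x1) (?a x2)) (?a (?a x3))"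
  let ?T2 = "gen (vadd V (?b (?a x1) (d x3)) (?b (d x1) (?a x3))) (?a (?a x2))
             - gen (?b (?a x1) (d x3)) (?a (?a x2)) - gen (?b (d x1) (?a x3)) (?a (?a x2))"
  let ?T3 = "gen (?a (?a x1)) (vadd V (?b (?a x2) (d x3)) (?b (d x2) (?a x3)))
             - gen (?a (?a x1)) (?b (?a x2) (d x3)) - gen (?a (?a x1)) (?b (d x2) (?a x3))"
  have eq: "der_free d (- gen (vbr V x1 x2) (valpha V x3) + gen (vbr V x1 x3) (valpha V x2)
           + gen (valpha V x1) (vbr V x2 x3)) = (?I1 + ?I2 + ?I3) + (- ?T1 + ?T2 + ?T3)"
    using x d by (simp add: der_free_def pmlin_add pmlin_minus pmlin_diff der_pair_def Der_br alpha_br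
        Der_alpha algebra_simps)
  have I: "?I1 \<in> uce_rel V" "?I2 \<in> uce_rel V" "?I3 \<in> uce_rel V"
    by (rule uce_rel_leibniz; use x dx in simp)+
  have T: "?T1 \<in> uce_rel V" "?T2 \<in> uce_rel V" "?T3 \<in> uce_rel V"
    using x dx by (auto intro!: uce_rel_add_left uce_rel_add_right)
  have "(?I1 + ?I2 + ?I3) + (- ?T1 + ?T2 + ?T3) \<in> uce_rel V"
    by (intro uce_rel_add uce_rel_minus I T)
  then show ?thesis by (simp only: eq)
qed

lemma der_free_uce_rel:
  assumes d: "d \<in> Der V" and r: "r \<in> uce_rel V"
  shows "der_free d r \<in> uce_rel V"
  unfolding der_free_def using r
proof (induction rule: uce_rel_induct)
  case (add_left a a' b)
  then have "pmlin (der_pair d) (gen (vadd V a a') b - gen a b - gen a' b)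
      = (gen (vadd V (d a) (d a')) (valpha V b) - gen (d a) (valpha V b) - gen (d a') (valpha V b))
      + (gen (vadd V (valpha V a) (valpha V a')) (d b) - gen (valpha V a) (d b) - gen (valpha V a') (d b))"
    using d by (simp add: pmlin_diff pmlin_add pmlin_minus der_pair_def Der_add alpha_add algebra_simps)
  then show ?case using add_left d by (simp add: uce_rel_add uce_rel_add_left Der_in)
next
  case (add_right a b b')
  then have "pmlin (der_pair d) (gen a (vadd V b b') - gen a b - gen a b')
      = (gen (d a) (vadd V (valpha V b) (valpha V b')) - gen (d a) (valpha V b) - gen (d a) (valpha V b'))
      + (gen (valpha V a) (vadd V (d b) (d b')) - gen (valpha V a) (d b) - gen (valpha V a) (d b'))"
    using d by (simp add: pmlin_diff pmlin_add pmlin_minus der_pair_def Der_add alpha_add algebra_simps)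
  then show ?case using add_right d by (simp add: uce_rel_add uce_rel_add_right Der_in)
next
  case (smult_left c a b)
  then have "pmlin (der_pair d) (gen (vsmult V c a) b - psm c (gen a b))
      = (gen (vsmult V c (d a)) (valpha V b) - psm c (gen (d a) (valpha V b)))
      + (gen (vsmult V c (valpha V a)) (d b) - psm c (gen (valpha V a) (d b)))"
    using d by (simp add: pmlin_diff pmlin_add pmlin_minus pmlin_psm der_pair_def Der_sm alpha_sm psm_add_right algebra_simps)
  then show ?case using smult_left d by (simp add: uce_rel_add uce_rel_smult_left Der_in)
next
  case (smult_right c a b)
  then have "pmlin (der_pair d) (gen a (vsmult V c b) - psm c (gen a b))
      = (gen (d a) (vsmult V c (valpha V b)) - psm c (gen (d a) (valpha V b)))
      + (gen (valpha V a) (vsmult V c (d b)) - psm c (gen (valpha V a) (d b)))"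
    using d by (simp add: pmlin_diff pmlin_add pmlin_minus pmlin_psm der_pair_def Der_sm alpha_sm psm_add_right algebra_simps)
  then show ?case using smult_right d by (simp add: uce_rel_add uce_rel_smult_right Der_in)
next
  case (leibniz x1 x2 x3)
  then show ?case using der_free_leibniz_rel[OF d] by (simp add: der_free_def)
qed (simp_all add: pmlin_add pmlin_psm uce_rel_add uce_rel_psm)

lemma alpha_free_uce_rel:
  assumes r: "r \<in> uce_rel V"
  shows "alpha_free r \<in> uce_rel V"
  unfolding alpha_free_def using r
proof (induction rule: uce_rel_induct)
  case (leibniz x1 x2 x3)
  then have "pmlin alpha_pair (- gen (vbr V x1 x2) (valpha V x3) + gen (vbr V x1 x3) (valpha V x2)
        + gen (valpha V x1) (vbr V x2 x3))
      = - gen (vbr V (valpha V x1) (valpha V x2)) (valpha V (valpha V x3))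
        + gen (vbr V (valpha V x1) (valpha V x3)) (valpha V (valpha V x2))
        + gen (valpha V (valpha V x1)) (vbr V (valpha V x2) (valpha V x3))"
    by (simp add: pmlin_add pmlin_minus pmlin_diff alpha_pair_def alpha_br)
  then show ?case using leibniz by (simp only:) (rule uce_rel_leibniz; simp)
qed (simp_all add: pmlin_add pmlin_diff pmlin_psm alpha_pair_def alpha_add alpha_sm uce_rel_add uce_rel_psm
    uce_rel_add_left
    uce_rel_add_right uce_rel_smult_left uce_rel_smult_right)

lemma der_free_free_on:
  assumes "d \<in> Der V" "v \<in> free_on (vcarr V)"
  shows "der_free d v \<in> free_on (vcarr V)"
  unfolding der_free_def der_pair_def
  by (rule free_on_pmlin) (use free_on_keys[OF assms(2)] assms(1) in \<open>auto intro!: free_on_add free_on_gen simp: Der_in\<close>)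

lemma alpha_free_free_on:
  assumes "v \<in> free_on (vcarr V)"
  shows "alpha_free v \<in> free_on (vcarr V)"
  unfolding alpha_free_def alpha_pair_def
  by (rule free_on_pmlin) (use free_on_keys[OF assms] in \<open>auto intro!: free_on_gen\<close>)

lemma ucls_in_uce: "v \<in> free_on (vcarr V) \<Longrightarrow> ucls V v \<in> vcarr (uce V)"
  by (simp add: uce_carr)

lemma uce_der_ucls:
  assumes "d \<in> Der V" "v \<in> free_on (vcarr V)"
  shows "uce_der V d (ucls V v) = ucls V (der_free d v)"
proof -
  have "uce_der V d (ucls V v) = ucls V (pmlin (der_pair d) (urep (ucls V v)))"
    using ucls_in_uce[OF assms(2)] by (simp add: uce_der_def der_pair_def[abs_def])
  also have "\<dots> = ucls V (pmlin (der_pair d) v)"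
    by (rule ucls_pmlin_urep) (use der_free_uce_rel[OF assms(1)] in \<open>simp add: der_free_def\<close>)
  finally show ?thesis by (simp add: der_free_def)
qed

lemma uce_alpha_ucls: "valpha (uce V) (ucls V v) = ucls V (alpha_free v)"
proof -
  have "valpha (uce V) (ucls V v) = ucls V (pmlin alpha_pair (urep (ucls V v)))"
    by (simp add: uce_def alpha_pair_def[abs_def])
  also have "\<dots> = ucls V (pmlin alpha_pair v)"
    by (rule ucls_pmlin_urep) (use alpha_free_uce_rel in \<open>simp add: alpha_free_def\<close>)
  finally show ?thesis by (simp add: alpha_free_def)
qed

lemma U_free_pmlin: "U_free (pmlin h v) = lincomb (\<lambda>p. U_free (h p)) v"
  unfolding U_free_def by (rule lincomb_pmlin[OF pair_br_in])

lemma U_free_der_free: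
  assumes d: "d \<in> Der V" and v: "v \<in> free_on (vcarr V)"
  shows "U_free (der_free d v) = d (U_free v)"
proof -
  have "U_free (der_free d v) = lincomb (\<lambda>p. U_free (der_pair d p)) v"
    by (simp add: der_free_def U_free_pmlin)
  also have "\<dots> = lincomb (\<lambda>p. d (pair_br p)) v"
    using free_on_keys[OF v] d
    by (intro lincomb_cong) (auto simp: der_pair_def U_free_add U_free_gen Der_in Der_br pair_br_def add_comm)
  also have "\<dots> = d (lincomb pair_br v)"
    by (rule lin_lincomb[symmetric, OF vspace_axioms vspace_axioms Der_lin[OF d] pair_br_in])
  finally show ?thesis by (simp add: U_free_def)
qed

lemma U_free_alpha_free:
  assumes v: "v \<in> free_on (vcarr V)"
  shows "U_free (alpha_free v) = valpha V (U_free v)"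
proof -
  have "U_free (alpha_free v) = lincomb (\<lambda>p. U_free (alpha_pair p)) v"
    by (simp add: alpha_free_def U_free_pmlin)
  also have "\<dots> = lincomb (\<lambda>p. valpha V (pair_br p)) v"
    using free_on_keys[OF v]
    by (intro lincomb_cong) (auto simp: alpha_pair_def U_free_gen pair_br_def alpha_br)
  also have "\<dots> = valpha V (lincomb pair_br v)"
    by (rule lin_lincomb[symmetric, OF vspace_axioms vspace_axioms lin_alpha pair_br_in])
  finally show ?thesis by (simp add: U_free_def)
qed

lemma der_free_alpha_free:
  assumes d: "d \<in> Der V" and v: "v \<in> free_on (vcarr V)"
  shows "der_free d (alpha_free v) = alpha_free (der_free d v)"
  unfolding der_free_def alpha_free_def pmlin_pmlin
  using free_on_keys[OF v] d
  by (intro pmlin_cong) (auto simp: alpha_pair_def der_pair_def pmlin_add Der_alpha)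

lemma der_free_der_add:
  assumes d1: "d1 \<in> Der V" and d2: "d2 \<in> Der V" and v: "v \<in> free_on (vcarr V)"
  shows "der_free (der_add V d1 d2) v - (der_free d1 v + der_free d2 v) \<in> uce_rel V"
proof -
  have "der_free (der_add V d1 d2) v - (der_free d1 v + der_free d2 v) =
        pmlin (\<lambda>p. der_pair (der_add V d1 d2) p - (der_pair d1 p + der_pair d2 p)) v"
    by (simp add: der_free_def pmlin_fun_diff pmlin_fun_add)
  also have "\<dots> \<in> uce_rel V"
  proof (rule pmlin_in_uce_rel)
    fix p assume "p \<in> Poly_Mapping.keys v"
    then have p: "fst p \<in> vcarr V" "snd p \<in> vcarr V" using free_on_keys[OF v] by auto
    have "der_pair (der_add V d1 d2) p - (der_pair d1 p + der_pair d2 p) =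
       (gen (vadd V (d1 (fst p)) (d2 (fst p))) (valpha V (snd p))
          - gen (d1 (fst p)) (valpha V (snd p)) - gen (d2 (fst p)) (valpha V (snd p)))
     + (gen (valpha V (fst p)) (vadd V (d1 (snd p)) (d2 (snd p)))
          - gen (valpha V (fst p)) (d1 (snd p)) - gen (valpha V (fst p)) (d2 (snd p)))"
      using p by (simp add: der_pair_def der_add_def algebra_simps)
    also have "\<dots> \<in> uce_rel V"
      using p d1 d2 by (intro uce_rel_add uce_rel_add_left uce_rel_add_right) (auto simp: Der_in)
    finally show "der_pair (der_add V d1 d2) p - (der_pair d1 p + der_pair d2 p) \<in> uce_rel V" .
  qed
  finally show ?thesis .
qed

lemma der_free_der_smult:
  assumes d: "d \<in> Der V" and v: "v \<in> free_on (vcarr V)"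
  shows "der_free (der_smult V c d) v - psm c (der_free d v) \<in> uce_rel V"
proof -
  have "der_free (der_smult V c d) v - psm c (der_free d v) =
        pmlin (\<lambda>p. der_pair (der_smult V c d) p - psm c (der_pair d p)) v"
    by (simp add: der_free_def pmlin_fun_diff pmlin_fun_psm)
  also have "\<dots> \<in> uce_rel V"
  proof (rule pmlin_in_uce_rel)
    fix p assume "p \<in> Poly_Mapping.keys v"
    then have p: "fst p \<in> vcarr V" "snd p \<in> vcarr V" using free_on_keys[OF v] by auto
    have "der_pair (der_smult V c d) p - psm c (der_pair d p) =
       (gen (vsmult V c (d (fst p))) (valpha V (snd p)) - psm c (gen (d (fst p)) (valpha V (snd p))))
     + (gen (valpha V (fst p)) (vsmult V c (d (snd p))) - psm c (gen (valpha V (fst p)) (d (snd p))))"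
      using p by (simp add: der_pair_def der_smult_def psm_add_right algebra_simps)
    also have "\<dots> \<in> uce_rel V"
      using p d by (intro uce_rel_add uce_rel_smult_left uce_rel_smult_right) (auto simp: Der_in)
    finally show "der_pair (der_smult V c d) p - psm c (der_pair d p) \<in> uce_rel V" .
  qed
  finally show ?thesis .
qed

end

context perfect_hl
begin

text \<open>Modulo the bilinearity relations, the bracket \<open>[{a,b},{c,e}] = {[a,b],[c,e]}\<close> of
  representatives only depends on \<open>U\<^sub>\<alpha>\<close> of the two factors.\<close>

lemma gen_zero_right: "a \<in> vcarr V \<Longrightarrow> gen a (vzero V) \<in> uce_rel V"
  using uce_rel_smult_right[of a "vzero V" 0] by simp
lemma gen_zero_left: "b \<in> vcarr V \<Longrightarrow> gen (vzero V) b \<in> uce_rel V"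
  using uce_rel_smult_left[of "vzero V" b 0] by simp

lemma pmlin_gen_br_right:
  assumes a: "a \<in> vcarr V" and w: "w \<in> free_on (vcarr V)"
  shows "pmlin (\<lambda>q. gen a (vbr V (fst q) (snd q))) w - gen a (U_free w) \<in> uce_rel V"
  using w[unfolded free_on_def, simplified]
proof (induction w rule: poly_mapping_induct)
  case zero
  then show ?case using gen_zero_right[OF a] uce_rel_minus by fastforce
next
  case (step p c w)
  let ?x = "vbr V (fst p) (snd p)"
  have p: "fst p \<in> vcarr V" "snd p \<in> vcarr V" using step by auto
  have U: "U_free (Poly_Mapping.single p c + w) = vadd V (vsmult V c ?x) (U_free w)"
    using p by (simp add: U_free_add U_free_single mem_Times_iff)
  have "pmlin (\<lambda>q. gen a (vbr V (fst q) (snd q))) (Poly_Mapping.single p c + w)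
          - gen a (U_free (Poly_Mapping.single p c + w))
      = (pmlin (\<lambda>q. gen a (vbr V (fst q) (snd q))) w - gen a (U_free w))
        - (gen a (vadd V (vsmult V c ?x) (U_free w)) - gen a (vsmult V c ?x) - gen a (U_free w))
        - (gen a (vsmult V c ?x) - psm c (gen a ?x))"
    by (simp add: U pmlin_add pmlin_single)
  also have "\<dots> \<in> uce_rel V"
  proof -
    have "gen a (vadd V (vsmult V c ?x) (U_free w)) - gen a (vsmult V c ?x) - gen a (U_free w) \<in> uce_rel V"
      and "gen a (vsmult V c ?x) - psm c (gen a ?x) \<in> uce_rel V"
      using p a by (auto intro!: uce_rel_add_right uce_rel_smult_right)
    then show ?thesis by (rule uce_rel_diff[OF uce_rel_diff[OF step(3)]])
  qed
  finally show ?case .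
qed

lemma pmlin_gen_br:
  assumes v: "v \<in> free_on (vcarr V)" and w: "w \<in> free_on (vcarr V)"
  shows "pmlin (\<lambda>p. pmlin (\<lambda>q. gen (vbr V (fst p) (snd p)) (vbr V (fst q) (snd q))) w) v
           - gen (U_free v) (U_free w) \<in> uce_rel V"
  using v[unfolded free_on_def, simplified]
proof (induction v rule: poly_mapping_induct)
  case zero
  then show ?case using gen_zero_left[of "U_free w"] uce_rel_minus by fastforce
next
  case (step p c v)
  let ?x = "vbr V (fst p) (snd p)"
  let ?X = "pmlin (\<lambda>q. gen ?x (vbr V (fst q) (snd q))) w"
  let ?F = "\<lambda>p. pmlin (\<lambda>q. gen (vbr V (fst p) (snd p)) (vbr V (fst q) (snd q))) w"
  have p: "fst p \<in> vcarr V" "snd p \<in> vcarr V" using step by auto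
  have U: "U_free (Poly_Mapping.single p c + v) = vadd V (vsmult V c ?x) (U_free v)"
    using p by (simp add: U_free_add U_free_single mem_Times_iff)
  have "pmlin ?F (Poly_Mapping.single p c + v) - gen (U_free (Poly_Mapping.single p c + v)) (U_free w)
      = psm c (?X - gen ?x (U_free w)) + (pmlin ?F v - gen (U_free v) (U_free w))
        - (gen (vadd V (vsmult V c ?x) (U_free v)) (U_free w) - gen (vsmult V c ?x) (U_free w)
            - gen (U_free v) (U_free w))
        - (gen (vsmult V c ?x) (U_free w) - psm c (gen ?x (U_free w)))"
    by (simp add: U pmlin_add pmlin_single psm_diff)
  also have "\<dots> \<in> uce_rel V"
  proof -
    have "?X - gen ?x (U_free w) \<in> uce_rel V" using pmlin_gen_br_right[OF _ w, of ?x] p by simp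
    moreover have "gen (vadd V (vsmult V c ?x) (U_free v)) (U_free w) - gen (vsmult V c ?x) (U_free w)
        - gen (U_free v) (U_free w) \<in> uce_rel V"
      and "gen (vsmult V c ?x) (U_free w) - psm c (gen ?x (U_free w)) \<in> uce_rel V"
      using p by (auto intro!: uce_rel_add_left uce_rel_smult_left)
    ultimately show ?thesis
      by (rule uce_rel_diff[OF uce_rel_diff[OF uce_rel_add[OF uce_rel_psm step(3)]]])
  qed
  finally show ?case .
qed

lemma uce_br_ucls:
  assumes v: "v \<in> free_on (vcarr V)" and w: "w \<in> free_on (vcarr V)"
  shows "vbr (uce V) (ucls V v) (ucls V w) = ucls V (gen (U_free v) (U_free w))"
proof -
  have "vbr (uce V) (ucls V v) (ucls V w) =
     ucls V (pmlin (\<lambda>p. pmlin (\<lambda>q. gen (vbr V (fst p) (snd p)) (vbr V (fst q) (snd q)))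
       (urep (ucls V w))) (urep (ucls V v)))"
    by (simp add: uce_def)
  also have "\<dots> = ucls V (gen (U_free (urep (ucls V v))) (U_free (urep (ucls V w))))"
    by (rule ucls_eqI, rule pmlin_gen_br) (auto intro: urep_free_on v w)
  finally show ?thesis by (simp add: U_free_urep)
qed

lemma uce_elim:
  assumes "X \<in> vcarr (uce V)"
  obtains v where "v \<in> free_on (vcarr V)" "X = ucls V v"
  using assms by (auto simp: uce_carr)

lemma uce_zero: "vzero (uce V) = ucls V 0"
  by (simp add: uce_def)

lemma uceU_in: "X \<in> vcarr (uce V) \<Longrightarrow> uceU V X \<in> vcarr V"
  by (erule uce_elim) (simp add: uceU_ucls)
lemma uce_alpha_in: "X \<in> vcarr (uce V) \<Longrightarrow> valpha (uce V) X \<in> vcarr (uce V)"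
  by (auto elim!: uce_elim simp: uce_alpha_ucls ucls_in_uce alpha_free_free_on)
lemma uce_br_eq: "X \<in> vcarr (uce V) \<Longrightarrow> Y \<in> vcarr (uce V) \<Longrightarrow>
    vbr (uce V) X Y = ucls V (gen (uceU V X) (uceU V Y))"
  by (auto elim!: uce_elim simp: uce_br_ucls uceU_ucls)
lemma uce_br_in: "X \<in> vcarr (uce V) \<Longrightarrow> Y \<in> vcarr (uce V) \<Longrightarrow> vbr (uce V) X Y \<in> vcarr (uce V)"
  by (simp add: uce_br_eq ucls_in_uce free_on_gen uceU_in)

lemma vspace_uce: "vspace (uce V)"
proof -
  have neg: "\<exists>Y\<in>vcarr (uce V). vadd (uce V) (ucls V v) Y = ucls V 0" if "v \<in> free_on (vcarr V)" for v
    using that by (intro bexI[of _ "ucls V (- v)"]) (simp_all add: uce_add ucls_in_uce free_on_minus)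
  show ?thesis
    unfolding vspace_def vector_space_on_def
    by (auto elim!: uce_elim intro: neg simp: uce_zero uce_add uce_sm ucls_in_uce free_on_add free_on_psm
        ac_simps psm_add_right psm_add_left)
qed

lemma hl_hom_uceU: "hl_hom (uce V) V (uceU V)"
  unfolding hl_hom_def
  by (auto elim!: uce_elim simp: uceU_in uce_add uce_sm uce_alpha_ucls uceU_ucls uce_br_eq
      free_on_add free_on_psm alpha_free_free_on free_on_gen U_free_add U_free_psm U_free_alpha_free U_free_gen)

lemma uceU_onto: "uceU V ` vcarr (uce V) = vcarr V"
proof
  show "uceU V ` vcarr (uce V) \<subseteq> vcarr V" using uceU_in by blast
  show "vcarr V \<subseteq> uceU V ` vcarr (uce V)"
    using U_free_surj by (force simp: uce_carr uceU_ucls)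
qed

end

context perfect_hl
begin

lemma Der_uce_der:
  assumes d: "d \<in> Der V"
  shows "uce_der V d \<in> Der (uce V)"
proof (rule DerI)
  show "uce_der V d \<in> extensional (vcarr (uce V))" by (simp add: uce_der_def)
next
  fix X assume "X \<in> vcarr (uce V)"
  then obtain v where v: "v \<in> free_on (vcarr V)" "X = ucls V v" by (rule uce_elim)
  show "uce_der V d X \<in> vcarr (uce V)"
    using v d by (simp add: uce_der_ucls ucls_in_uce der_free_free_on)
  show "uce_der V d (vsmult (uce V) c X) = vsmult (uce V) c (uce_der V d X)" for c
    using v d by (simp add: uce_sm uce_der_ucls free_on_psm der_free_def pmlin_psm)
  show "uce_der V d (valpha (uce V) X) = valpha (uce V) (uce_der V d X)"
    using v d by (simp add: uce_alpha_ucls uce_der_ucls alpha_free_free_on der_free_free_on der_free_alpha_free)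
next
  fix X Y assume "X \<in> vcarr (uce V)" "Y \<in> vcarr (uce V)"
  then obtain v w where v: "v \<in> free_on (vcarr V)" "X = ucls V v"
    and w: "w \<in> free_on (vcarr V)" "Y = ucls V w" by (metis uce_elim)
  show "uce_der V d (vadd (uce V) X Y) = vadd (uce V) (uce_der V d X) (uce_der V d Y)"
    using v w d by (simp add: uce_add uce_der_ucls free_on_add der_free_def pmlin_add)
  show "uce_der V d (vbr (uce V) X Y) = vadd (uce V) (vbr (uce V) (valpha (uce V) X) (uce_der V d Y))
      (vbr (uce V) (uce_der V d X) (valpha (uce V) Y))"
    using v w d
    by (simp add: uce_br_ucls uce_der_ucls uce_alpha_ucls uce_add free_on_gen der_free_free_on
        alpha_free_free_on U_free_alpha_free U_free_der_free der_free_gen add.commute)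
qed

lemma uceU_uce_der:
  assumes d: "d \<in> Der V" and X: "X \<in> vcarr (uce V)"
  shows "uceU V (uce_der V d X) = d (uceU V X)"
  using X by (auto elim!: uce_elim simp: uce_der_ucls[OF d] uceU_ucls der_free_free_on[OF d] U_free_der_free[OF d])

lemma uce_der_preserves_ker:
  assumes d: "d \<in> Der V"
  shows "uce_der V d ` hl_ker (uce V) V (uceU V) \<subseteq> hl_ker (uce V) V (uceU V)"
  using d Der_uce_der[OF d] by (auto simp: hl_ker_def uceU_uce_der Der_zero Der_in)

text \<open>A derivation of \<open>uce\<^sub>\<alpha>(L)\<close> is determined by its composite with \<open>U\<^sub>\<alpha>\<close>: by the Leibniz rule its
  value on \<open>{a,b} = [P,Q]\<close> only involves brackets, which only see \<open>U\<^sub>\<alpha>\<close> of their arguments.\<close>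

lemma Der_uce_eq_on_gen:
  assumes d1: "\<delta>1 \<in> Der (uce V)" and d2: "\<delta>2 \<in> Der (uce V)"
    and eq: "\<And>X. X \<in> vcarr (uce V) \<Longrightarrow> uceU V (\<delta>1 X) = uceU V (\<delta>2 X)"
    and ab: "a \<in> vcarr V" "b \<in> vcarr V"
  shows "\<delta>1 (ucls V (gen a b)) = \<delta>2 (ucls V (gen a b))"
proof -
  obtain va vb where va: "va \<in> free_on (vcarr V)" "U_free va = a"
    and vb: "vb \<in> free_on (vcarr V)" "U_free vb = b"
    using U_free_surj ab by metis
  let ?P = "ucls V va" and ?Q = "ucls V vb"
  have PQ: "?P \<in> vcarr (uce V)" "?Q \<in> vcarr (uce V)" using va vb by (simp_all add: ucls_in_uce)
  have aPQ: "valpha (uce V) ?P \<in> vcarr (uce V)" "valpha (uce V) ?Q \<in> vcarr (uce V)"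
    using PQ by (simp_all add: uce_alpha_in)
  have gen_eq: "ucls V (gen a b) = vbr (uce V) ?P ?Q" using va vb by (simp add: uce_br_ucls)
  have "\<delta>1 (vbr (uce V) ?P ?Q)
      = vadd (uce V) (vbr (uce V) (valpha (uce V) ?P) (\<delta>1 ?Q)) (vbr (uce V) (\<delta>1 ?P) (valpha (uce V) ?Q))"
    by (rule Der_br[OF d1 PQ])
  also have "\<dots> = vadd (uce V) (vbr (uce V) (valpha (uce V) ?P) (\<delta>2 ?Q)) (vbr (uce V) (\<delta>2 ?P) (valpha (uce V) ?Q))"
    using PQ aPQ d1 d2 by (simp add: uce_br_eq Der_in eq)
  also have "\<dots> = \<delta>2 (vbr (uce V) ?P ?Q)"
    by (rule Der_br[OF d2 PQ, symmetric])
  finally show ?thesis by (simp only: gen_eq)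
qed

lemma Der_uce_eqI:
  assumes d1: "\<delta>1 \<in> Der (uce V)" and d2: "\<delta>2 \<in> Der (uce V)"
    and eq: "\<And>X. X \<in> vcarr (uce V) \<Longrightarrow> uceU V (\<delta>1 X) = uceU V (\<delta>2 X)"
  shows "\<delta>1 = \<delta>2"
proof (rule Der_eqI[OF d1 d2])
  interpret uce: vspace "uce V" by (rule vspace_uce)
  fix X assume "X \<in> vcarr (uce V)"
  then obtain v where v: "v \<in> free_on (vcarr V)" "X = ucls V v" by (rule uce_elim)
  have "Poly_Mapping.keys v \<subseteq> vcarr V \<times> vcarr V" using v by (simp add: free_on_def)
  then have "\<delta>1 (ucls V v) = \<delta>2 (ucls V v)"
  proof (induction v rule: poly_mapping_induct)
    case zero
    then show ?case
      using lin_zero[OF uce.vspace_axioms uce.vspace_axioms Der_lin[OF d1]]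
        lin_zero[OF uce.vspace_axioms uce.vspace_axioms Der_lin[OF d2]]
      by (simp add: uce_zero)
  next
    case (step p c w)
    obtain a b where p: "p = (a, b)" "a \<in> vcarr V" "b \<in> vcarr V" using step by (cases p) auto
    have G: "ucls V (gen a b) \<in> vcarr (uce V)" using p by (simp add: ucls_in_uce free_on_gen)
    have W: "ucls V w \<in> vcarr (uce V)" using step by (simp add: ucls_in_uce free_on_def)
    have "ucls V (Poly_Mapping.single p c + w)
        = vadd (uce V) (vsmult (uce V) c (ucls V (gen a b))) (ucls V w)"
      by (simp add: uce_sm uce_add psm_gen p)
    then show ?case
      using d1 d2 G W step(3) Der_uce_eq_on_gen[OF d1 d2 eq p(2,3)] by (simp add: Der_add Der_sm)
  qed
  then show "\<delta>1 X = \<delta>2 X" using v by simp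
qed

lemma uce_der_inj:
  assumes d1: "d1 \<in> Der V" and d2: "d2 \<in> Der V" and eq: "uce_der V d1 = uce_der V d2"
  shows "d1 = d2"
proof (rule Der_eqI[OF d1 d2])
  fix x assume "x \<in> vcarr V"
  then obtain v where v: "v \<in> free_on (vcarr V)" "U_free v = x" using U_free_surj by blast
  then show "d1 x = d2 x"
    using uceU_uce_der[OF d1, of "ucls V v"] uceU_uce_der[OF d2, of "ucls V v"]
    by (simp add: eq ucls_in_uce uceU_ucls)
qed

lemma uce_der_surj:
  assumes \<delta>: "\<delta> \<in> Der (uce V)" "\<delta> ` hl_ker (uce V) V (uceU V) \<subseteq> hl_ker (uce V) V (uceU V)"
  shows "\<exists>d\<in>Der V. uce_der V d = \<delta>"
proof -
  obtain d where d: "d \<in> Der V" and comm: "\<forall>X\<in>vcarr (uce V). uceU V (\<delta> X) = d (uceU V X)"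
    using Der_descends[OF vspace_uce vspace_axioms hl_hom_uceU uceU_onto uce_br_in uce_alpha_in \<delta>]
    by blast
  have "uce_der V d = \<delta>"
    by (rule Der_uce_eqI[OF Der_uce_der[OF d] \<delta>(1)]) (simp add: uceU_uce_der[OF d] comm)
  then show ?thesis using d by blast
qed

lemma uce_der_der_add:
  assumes d1: "d1 \<in> Der V" and d2: "d2 \<in> Der V"
  shows "uce_der V (der_add V d1 d2) = der_add (uce V) (uce_der V d1) (uce_der V d2)"
proof (rule ext)
  fix X show "uce_der V (der_add V d1 d2) X = der_add (uce V) (uce_der V d1) (uce_der V d2) X"
  proof (cases "X \<in> vcarr (uce V)")
    case True
    then obtain v where v: "v \<in> free_on (vcarr V)" "X = ucls V v" by (rule uce_elim)
    have "uce_der V (der_add V d1 d2) X = ucls V (der_free (der_add V d1 d2) v)"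
      using v Der_der_add[OF d1 d2] by (simp add: uce_der_ucls)
    also have "\<dots> = ucls V (der_free d1 v + der_free d2 v)"
      by (rule ucls_eqI, rule der_free_der_add[OF d1 d2 v(1)])
    also have "\<dots> = der_add (uce V) (uce_der V d1) (uce_der V d2) X"
      using v d1 d2 True by (simp add: der_add_def uce_der_ucls uce_add)
    finally show ?thesis .
  qed (simp add: uce_der_def der_add_def)
qed

lemma uce_der_der_smult:
  assumes d: "d \<in> Der V"
  shows "uce_der V (der_smult V c d) = der_smult (uce V) c (uce_der V d)"
proof (rule ext)
  fix X show "uce_der V (der_smult V c d) X = der_smult (uce V) c (uce_der V d) X"
  proof (cases "X \<in> vcarr (uce V)")
    case True
    then obtain v where v: "v \<in> free_on (vcarr V)" "X = ucls V v" by (rule uce_elim)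
    have "uce_der V (der_smult V c d) X = ucls V (der_free (der_smult V c d) v)"
      using v Der_der_smult[OF d] by (simp add: uce_der_ucls)
    also have "\<dots> = ucls V (psm c (der_free d v))"
      by (rule ucls_eqI, rule der_free_der_smult[OF d v(1)])
    also have "\<dots> = der_smult (uce V) c (uce_der V d) X"
      using v d True by (simp add: der_smult_def uce_der_ucls uce_sm)
    finally show ?thesis .
  qed (simp add: uce_der_def der_smult_def)
qed

theorem uce_der_lin_iso:
  "der_lin_iso V (uce V) (Der V)
     {\<delta> \<in> Der (uce V). \<delta> ` hl_ker (uce V) V (uceU V) \<subseteq> hl_ker (uce V) V (uceU V)} (uce_der V)"
  unfolding der_lin_iso_def bij_betw_def
proof (intro conjI ballI allI)
  show "inj_on (uce_der V) (Der V)" by (auto intro: inj_onI uce_der_inj)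
  show "uce_der V ` Der V
      = {\<delta> \<in> Der (uce V). \<delta> ` hl_ker (uce V) V (uceU V) \<subseteq> hl_ker (uce V) V (uceU V)}"
    using uce_der_surj Der_uce_der uce_der_preserves_ker by fastforce
qed (simp_all add: uce_der_der_add uce_der_der_smult)

end

section \<open>\<open>\<alpha>\<close>-covers\<close>

locale hl_cover = L: perfect_hl L + L': perfect_hl L'
  for L :: "('k::field, 'a, 'm) hlalg_scheme" and L' :: "('k, 'b, 'n) hlalg_scheme" +
  fixes f :: "'b \<Rightarrow> 'a"
  assumes hom: "hl_hom L' L f"
    and onto: "f ` vcarr L' = vcarr L"
    and ker_central: "hl_ker L' L f \<subseteq> hl_center L'"
begin

lemma f_in [simp]: "x \<in> vcarr L' \<Longrightarrow> f x \<in> vcarr L"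
  and f_add: "x \<in> vcarr L' \<Longrightarrow> y \<in> vcarr L' \<Longrightarrow> f (vadd L' x y) = vadd L (f x) (f y)"
  and f_sm: "x \<in> vcarr L' \<Longrightarrow> f (vsmult L' c x) = vsmult L c (f x)"
  and f_br: "x \<in> vcarr L' \<Longrightarrow> y \<in> vcarr L' \<Longrightarrow> f (vbr L' x y) = vbr L (f x) (f y)"
  and f_alpha: "x \<in> vcarr L' \<Longrightarrow> f (valpha L' x) = valpha L (f x)"
  using hl_homD[OF hom] by simp_all

lemma lin_f: "lin_on L' L f"
  by (simp add: lin_on_def f_add f_sm)

lemma br_congr_fibre:
  assumes x: "x \<in> vcarr L'" and y: "y \<in> vcarr L'" and z: "z \<in> vcarr L'" and e: "f x = f y"
  shows "vbr L' x z = vbr L' y z" "vbr L' z x = vbr L' z y"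
proof -
  let ?k = "vadd L' x (vsmult L' (-1) y)"
  have k: "?k \<in> vcarr L'" using x y by simp
  have "?k \<in> hl_ker L' L f" using x y e k by (simp add: hl_ker_def f_add f_sm)
  then have central: "vbr L' ?k z = vzero L'" "vbr L' z ?k = vzero L'"
    using ker_central z by (auto simp: hl_center_def)
  have x_eq: "x = vadd L' y ?k" using L'.add_diff_cancel[OF x y] .
  show "vbr L' x z = vbr L' y z"
    using central x y z k by (subst x_eq) (simp add: L'.br_add_left)
  show "vbr L' z x = vbr L' z y"
    using central x y z k by (subst x_eq) (simp add: L'.br_add_right)
qed

lemma br_congr:
  assumes "x \<in> vcarr L'" "x' \<in> vcarr L'" "z \<in> vcarr L'" "z' \<in> vcarr L'" "f x = f x'" "f z = f z'"
  shows "vbr L' x z = vbr L' x' z'"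
  using br_congr_fibre(1)[OF assms(1,2,3,5)] br_congr_fibre(2)[OF assms(3,4,2,6)] by simp

definition map_pair :: "'b \<times> 'b \<Rightarrow> ('a \<times> 'a \<Rightarrow>\<^sub>0 'k)" where
  "map_pair p = gen (f (fst p)) (f (snd p))"

definition map_free :: "('b \<times> 'b \<Rightarrow>\<^sub>0 'k) \<Rightarrow> ('a \<times> 'a \<Rightarrow>\<^sub>0 'k)" where
  "map_free v = pmlin map_pair v"

lemma map_free_add: "map_free (v + w) = map_free v + map_free w"
  by (simp add: map_free_def pmlin_add)
lemma map_free_psm: "map_free (psm c v) = psm c (map_free v)"
  by (simp add: map_free_def pmlin_psm)
lemma map_free_gen: "map_free (gen a b) = gen (f a) (f b)"
  by (simp add: map_free_def map_pair_def)

lemma map_free_uce_rel: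
  assumes r: "r \<in> uce_rel L'"
  shows "map_free r \<in> uce_rel L"
  unfolding map_free_def using r
proof (induction rule: L'.uce_rel_induct)
  case (leibniz x1 x2 x3)
  then have "pmlin map_pair (- gen (vbr L' x1 x2) (valpha L' x3) + gen (vbr L' x1 x3) (valpha L' x2)
        + gen (valpha L' x1) (vbr L' x2 x3))
      = - gen (vbr L (f x1) (f x2)) (valpha L (f x3)) + gen (vbr L (f x1) (f x3)) (valpha L (f x2))
        + gen (valpha L (f x1)) (vbr L (f x2) (f x3))"
    by (simp add: pmlin_add pmlin_minus pmlin_diff map_pair_def f_br f_alpha)
  then show ?case using leibniz by (simp only:) (rule L.uce_rel_leibniz; simp)
qed (simp_all add: pmlin_add pmlin_diff pmlin_psm map_pair_def f_add f_sm uce_rel_add uce_rel_psm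
    L.uce_rel_add_left L.uce_rel_add_right L.uce_rel_smult_left L.uce_rel_smult_right)

lemma map_free_free_on:
  assumes "v \<in> free_on (vcarr L')"
  shows "map_free v \<in> free_on (vcarr L)"
  unfolding map_free_def map_pair_def
  by (rule free_on_pmlin) (use free_on_keys[OF assms] in \<open>auto intro!: free_on_gen\<close>)

lemma uce_map_ucls: "uce_map L f (ucls L' v) = ucls L (map_free v)"
proof -
  have "uce_map L f (ucls L' v) = ucls L (pmlin map_pair (urep (ucls L' v)))"
    by (simp add: uce_map_def map_pair_def[abs_def])
  also have "\<dots> = ucls L (pmlin map_pair v)"
    by (rule ucls_pmlin_urep) (use map_free_uce_rel in \<open>simp add: map_free_def\<close>)
  finally show ?thesis by (simp add: map_free_def)
qed

lemma U_free_map_free: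
  assumes v: "v \<in> free_on (vcarr L')"
  shows "L.U_free (map_free v) = f (L'.U_free v)"
proof -
  have "L.U_free (map_free v) = L.lincomb (\<lambda>p. L.U_free (map_pair p)) v"
    by (simp add: map_free_def L.U_free_pmlin)
  also have "\<dots> = L.lincomb (\<lambda>p. f (L'.pair_br p)) v"
    using free_on_keys[OF v]
    by (intro L.lincomb_cong) (auto simp: map_pair_def L.U_free_gen L'.pair_br_def f_br)
  also have "\<dots> = f (L'.lincomb L'.pair_br v)"
    by (rule lin_lincomb[symmetric, OF L'.vspace_axioms L.vspace_axioms lin_f L'.pair_br_in])
  finally show ?thesis by (simp add: L'.U_free_def)
qed

lemma map_free_der_free:
  assumes \<delta>: "\<delta> \<in> Der L'" and comm: "\<And>x. x \<in> vcarr L' \<Longrightarrow> f (\<delta> x) = d (f x)"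
    and v: "v \<in> free_on (vcarr L')"
  shows "map_free (L'.der_free \<delta> v) = L.der_free d (map_free v)"
  unfolding map_free_def L'.der_free_def L.der_free_def pmlin_pmlin
  using free_on_keys[OF v] \<delta>
  by (intro pmlin_cong) (auto simp: map_pair_def L'.der_pair_def L.der_pair_def pmlin_add comm f_alpha Der_in)

lemma map_free_alpha_free:
  assumes v: "v \<in> free_on (vcarr L')"
  shows "map_free (L'.alpha_free v) = L.alpha_free (map_free v)"
  unfolding map_free_def L'.alpha_free_def L.alpha_free_def pmlin_pmlin
  using free_on_keys[OF v]
  by (intro pmlin_cong) (auto simp: map_pair_def L'.alpha_pair_def L.alpha_pair_def f_alpha)

definition sec :: "'a \<Rightarrow> 'b" where
  "sec y = (SOME x. x \<in> vcarr L' \<and> f x = y)"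

lemma
  assumes "y \<in> vcarr L"
  shows sec_in: "sec y \<in> vcarr L'" and f_sec: "f (sec y) = y"
proof -
  have "y \<in> f ` vcarr L'" using assms onto by simp
  then have "\<exists>x. x \<in> vcarr L' \<and> f x = y" by blast
  then have "sec y \<in> vcarr L' \<and> f (sec y) = y" unfolding sec_def by (rule someI_ex)
  then show "sec y \<in> vcarr L'" "f (sec y) = y" by auto
qed

text \<open>Since brackets in \<open>L'\<close> only see values under \<open>f\<close>, \<open>{a,b} \<mapsto> [sec a, sec b]\<close> does not depend
  on the choice of the section and respects the defining relations of \<open>uce\<^sub>\<alpha>(L)\<close>.\<close>

definition sec_pair :: "'a \<times> 'a \<Rightarrow> 'b" where
  "sec_pair p = (if p \<in> vcarr L \<times> vcarr L then vbr L' (sec (fst p)) (sec (snd p)) else vzero L')"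

definition sec_free :: "('a \<times> 'a \<Rightarrow>\<^sub>0 'k) \<Rightarrow> 'b" where
  "sec_free v = L'.lincomb sec_pair v"

lemma sec_pair_in [simp]: "sec_pair p \<in> vcarr L'"
  by (auto simp: sec_pair_def sec_in)
lemma sec_free_in [simp]: "sec_free v \<in> vcarr L'"
  by (simp add: sec_free_def)
lemma sec_free_add: "sec_free (v + w) = vadd L' (sec_free v) (sec_free w)"
  by (simp add: sec_free_def L'.lincomb_add)
lemma sec_free_psm: "sec_free (psm c v) = vsmult L' c (sec_free v)"
  by (simp add: sec_free_def L'.lincomb_psm)
lemma sec_free_diff: "sec_free (v - w) = vadd L' (sec_free v) (vsmult L' (-1) (sec_free w))"
  by (simp add: sec_free_def L'.lincomb_diff)
lemma sec_free_gen: "a \<in> vcarr L \<Longrightarrow> b \<in> vcarr L \<Longrightarrow> sec_free (gen a b) = vbr L' (sec a) (sec b)"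
  by (simp add: sec_free_def L'.lincomb_gen[OF sec_pair_in] sec_pair_def)

lemma br_sec_eq:
  "x \<in> vcarr L' \<Longrightarrow> z \<in> vcarr L' \<Longrightarrow> a \<in> vcarr L \<Longrightarrow> b \<in> vcarr L \<Longrightarrow> f x = a \<Longrightarrow> f z = b \<Longrightarrow>
   vbr L' (sec a) (sec b) = vbr L' x z"
  by (rule br_congr) (auto simp: sec_in f_sec)

lemma sec_free_leibniz:
  assumes x: "x1 \<in> vcarr L" "x2 \<in> vcarr L" "x3 \<in> vcarr L"
  shows "sec_free (- gen (vbr L x1 x2) (valpha L x3) + gen (vbr L x1 x3) (valpha L x2)
      + gen (valpha L x1) (vbr L x2 x3)) = vzero L'"
proof -
  define y1 y2 y3 where "y1 = sec x1" and "y2 = sec x2" and "y3 = sec x3"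
  have y: "y1 \<in> vcarr L'" "y2 \<in> vcarr L'" "y3 \<in> vcarr L'" "f y1 = x1" "f y2 = x2" "f y3 = x3"
    using x by (auto simp: y1_def y2_def y3_def sec_in f_sec)
  have "vbr L' (sec (vbr L x1 x2)) (sec (valpha L x3)) = vbr L' (vbr L' y1 y2) (valpha L' y3)"
    and "vbr L' (sec (vbr L x1 x3)) (sec (valpha L x2)) = vbr L' (vbr L' y1 y3) (valpha L' y2)"
    and "vbr L' (sec (valpha L x1)) (sec (vbr L x2 x3)) = vbr L' (valpha L' y1) (vbr L' y2 y3)"
    using y by (auto intro!: br_sec_eq simp: f_br f_alpha)
  then show ?thesis
    using x y by (simp add: sec_free_add sec_free_diff sec_free_gen L'.leibniz L'.add_minus_swap)
qed

lemma sec_free_uce_rel: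
  assumes r: "r \<in> uce_rel L"
  shows "sec_free r = vzero L'"
  unfolding sec_free_def using L.perfect_hl_axioms r sec_pair_in
proof (rule L'.lincomb_uce_rel)
  fix a a' b assume ab: "a \<in> vcarr L" "a' \<in> vcarr L" "b \<in> vcarr L"
  have "vbr L' (sec (vadd L a a')) (sec b) = vbr L' (vadd L' (sec a) (sec a')) (sec b)"
    using ab by (intro br_sec_eq) (auto simp: sec_in f_sec f_add)
  then show "L'.lincomb sec_pair (gen (vadd L a a') b - gen a b - gen a' b) = vzero L'"
    using ab by (simp add: sec_free_diff[unfolded sec_free_def] sec_free_gen[unfolded sec_free_def]
        sec_in L'.br_add_left L'.add_minus_summands)
next
  fix a b b' assume ab: "a \<in> vcarr L" "b \<in> vcarr L" "b' \<in> vcarr L"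
  have "vbr L' (sec a) (sec (vadd L b b')) = vbr L' (sec a) (vadd L' (sec b) (sec b'))"
    using ab by (intro br_sec_eq) (auto simp: sec_in f_sec f_add)
  then show "L'.lincomb sec_pair (gen a (vadd L b b') - gen a b - gen a b') = vzero L'"
    using ab by (simp add: sec_free_diff[unfolded sec_free_def] sec_free_gen[unfolded sec_free_def]
        sec_in L'.br_add_right L'.add_minus_summands)
next
  fix c a b assume ab: "a \<in> vcarr L" "b \<in> vcarr L"
  have "vbr L' (sec (vsmult L c a)) (sec b) = vbr L' (vsmult L' c (sec a)) (sec b)"
    using ab by (intro br_sec_eq) (auto simp: sec_in f_sec f_sm)
  then show "L'.lincomb sec_pair (gen (vsmult L c a) b - psm c (gen a b)) = vzero L'"
    using ab by (simp add: sec_free_diff[unfolded sec_free_def] sec_free_gen[unfolded sec_free_def]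
        sec_free_psm[unfolded sec_free_def] sec_in L'.br_sm_left)
next
  fix c a b assume ab: "a \<in> vcarr L" "b \<in> vcarr L"
  have "vbr L' (sec a) (sec (vsmult L c b)) = vbr L' (sec a) (vsmult L' c (sec b))"
    using ab by (intro br_sec_eq) (auto simp: sec_in f_sec f_sm)
  then show "L'.lincomb sec_pair (gen a (vsmult L c b) - psm c (gen a b)) = vzero L'"
    using ab by (simp add: sec_free_diff[unfolded sec_free_def] sec_free_gen[unfolded sec_free_def]
        sec_free_psm[unfolded sec_free_def] sec_in L'.br_sm_right)
next
  fix x1 x2 x3 assume x: "x1 \<in> vcarr L" "x2 \<in> vcarr L" "x3 \<in> vcarr L"
  show "L'.lincomb sec_pair (- gen (vbr L x1 x2) (valpha L x3) + gen (vbr L x1 x3) (valpha L x2)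
      + gen (valpha L x1) (vbr L x2 x3)) = vzero L'"
    using sec_free_leibniz[OF x] unfolding sec_free_def .
qed

lemma sec_free_map_free:
  assumes v: "v \<in> free_on (vcarr L')"
  shows "sec_free (map_free v) = L'.U_free v"
  unfolding map_free_def sec_free_def L'.U_free_def L'.lincomb_pmlin[OF sec_pair_in]
  using free_on_keys[OF v]
  by (intro L'.lincomb_cong)
     (auto simp: map_pair_def sec_free_gen[unfolded sec_free_def] L'.pair_br_def br_sec_eq)

lemma f_sec_free:
  assumes v: "v \<in> free_on (vcarr L)"
  shows "f (sec_free v) = L.U_free v"
proof -
  have "f (sec_free v) = L.lincomb (\<lambda>p. f (sec_pair p)) v"
    unfolding sec_free_def by (rule lin_lincomb[OF L'.vspace_axioms L.vspace_axioms lin_f sec_pair_in])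
  also have "\<dots> = L.U_free v"
    unfolding L.U_free_def using free_on_keys[OF v]
    by (intro L.lincomb_cong) (auto simp: sec_pair_def L.pair_br_def f_br sec_in f_sec)
  finally show ?thesis .
qed

lemma alpha_sec_free:
  assumes v: "v \<in> free_on (vcarr L)"
  shows "valpha L' (sec_free v) = sec_free (L.alpha_free v)"
proof -
  have "valpha L' (sec_free v) = L'.lincomb (\<lambda>p. valpha L' (sec_pair p)) v"
    unfolding sec_free_def by (rule lin_lincomb[OF L'.vspace_axioms L'.vspace_axioms L'.lin_alpha sec_pair_in])
  also have "\<dots> = sec_free (L.alpha_free v)"
    unfolding L.alpha_free_def sec_free_def L'.lincomb_pmlin[OF sec_pair_in]
  proof (rule L'.lincomb_cong)
    fix p assume "p \<in> Poly_Mapping.keys v"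
    then have p: "fst p \<in> vcarr L" "snd p \<in> vcarr L" using free_on_keys[OF v] by auto
    have "vbr L' (sec (valpha L (fst p))) (sec (valpha L (snd p)))
        = vbr L' (valpha L' (sec (fst p))) (valpha L' (sec (snd p)))"
      using p by (intro br_sec_eq) (auto simp: sec_in f_sec f_alpha)
    then show "valpha L' (sec_pair p) = L'.lincomb sec_pair (L.alpha_pair p)"
      using p by (simp add: L.alpha_pair_def sec_free_gen[unfolded sec_free_def] sec_pair_def mem_Times_iff
          L'.alpha_br sec_in)
  qed
  finally show ?thesis .
qed

end

lemma (in perfect_hl) U_free_preimage:
  assumes "x \<in> vcarr V"
  obtains v where "v \<in> free_on (vcarr V)" "U_free v = x"
  using U_free_surj[OF assms] by blast

context hl_cover
begin

abbreviation C_cover :: "('a \<times> 'a \<Rightarrow>\<^sub>0 'k) set set" where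
  "C_cover \<equiv> uce_map L f ` hl_ker (uce L') L' (uceU L')"

lemma ker_uceU_elim:
  assumes "Y \<in> hl_ker (uce L') L' (uceU L')"
  obtains v where "v \<in> free_on (vcarr L')" "Y = ucls L' v" "L'.U_free v = vzero L'"
  using assms by (auto simp: hl_ker_def L'.uce_carr L'.uceU_ucls)

lemma ucls_in_ker_uceU:
  "v \<in> free_on (vcarr L') \<Longrightarrow> L'.U_free v = vzero L' \<Longrightarrow> ucls L' v \<in> hl_ker (uce L') L' (uceU L')"
  by (simp add: hl_ker_def L'.ucls_in_uce L'.uceU_ucls)

lemma uce_der_C_cover_if_lift:
  assumes d: "d \<in> Der L" and \<delta>: "\<delta> \<in> Der L'" and comm: "\<And>x. x \<in> vcarr L' \<Longrightarrow> f (\<delta> x) = d (f x)"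
  shows "uce_der L d ` C_cover \<subseteq> C_cover"
proof
  fix Z assume "Z \<in> uce_der L d ` C_cover"
  then obtain Y where Y: "Y \<in> hl_ker (uce L') L' (uceU L')" and Z: "Z = uce_der L d (uce_map L f Y)"
    by auto
  obtain v where v: "v \<in> free_on (vcarr L')" "Y = ucls L' v" "L'.U_free v = vzero L'"
    using Y by (rule ker_uceU_elim)
  have "Z = uce_map L f (ucls L' (L'.der_free \<delta> v))"
    using v d by (simp add: Z uce_map_ucls L.uce_der_ucls map_free_free_on map_free_der_free[OF \<delta> comm])
  moreover have "ucls L' (L'.der_free \<delta> v) \<in> hl_ker (uce L') L' (uceU L')"
    using v \<delta> by (simp add: ucls_in_ker_uceU L'.der_free_free_on L'.U_free_der_free L'.Der_zero)
  ultimately show "Z \<in> C_cover" by blast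
qed

definition lift_rep :: "('a \<Rightarrow> 'a) \<Rightarrow> ('b \<times> 'b \<Rightarrow>\<^sub>0 'k) \<Rightarrow> 'b" where
  "lift_rep d v = sec_free (L.der_free d (map_free v))"

definition der_lift :: "('a \<Rightarrow> 'a) \<Rightarrow> 'b \<Rightarrow> 'b" where
  "der_lift d = (\<lambda>x\<in>vcarr L'. lift_rep d (SOME v. v \<in> free_on (vcarr L') \<and> L'.U_free v = x))"

lemma lift_rep_add: "lift_rep d (v + w) = vadd L' (lift_rep d v) (lift_rep d w)"
  by (simp add: lift_rep_def map_free_add L.der_free_def pmlin_add sec_free_add)

lemma lift_rep_psm: "lift_rep d (psm c v) = vsmult L' c (lift_rep d v)"
  by (simp add: lift_rep_def map_free_psm L.der_free_def pmlin_psm sec_free_psm)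

text \<open>This is where \<open>uce\<^sub>\<alpha>(d)(C) \<subseteq> C\<close> enters: \<open>sec_free\<close> vanishes on \<open>C\<close>, since
  \<open>sec_free \<circ> uce\<^sub>\<alpha>(f) = U\<^sub>\<alpha>'\<close> on representatives.\<close>

lemma lift_rep_ker:
  assumes d: "d \<in> Der L" and C: "uce_der L d ` C_cover \<subseteq> C_cover"
    and k: "k \<in> free_on (vcarr L')" "L'.U_free k = vzero L'"
  shows "lift_rep d k = vzero L'"
proof -
  have "uce_der L d (uce_map L f (ucls L' k)) \<in> C_cover"
    using C ucls_in_ker_uceU[OF k] by blast
  then obtain k' where k': "k' \<in> free_on (vcarr L')" "L'.U_free k' = vzero L'"
    and e: "uce_der L d (uce_map L f (ucls L' k)) = uce_map L f (ucls L' k')"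
    by (auto elim!: ker_uceU_elim)
  have "ucls L (L.der_free d (map_free k)) = ucls L (map_free k')"
    using e k k' d by (simp add: uce_map_ucls L.uce_der_ucls map_free_free_on)
  then have "sec_free (L.der_free d (map_free k) - map_free k') = vzero L'"
    by (intro sec_free_uce_rel ucls_eqD)
  then have "lift_rep d k = sec_free (map_free k')"
    by (simp add: lift_rep_def sec_free_diff L'.diff_zero_eq)
  also have "\<dots> = vzero L'" using k' by (simp add: sec_free_map_free)
  finally show ?thesis .
qed

lemma der_lift_U_free:
  assumes d: "d \<in> Der L" and C: "uce_der L d ` C_cover \<subseteq> C_cover"
    and v: "v \<in> free_on (vcarr L')"
  shows "der_lift d (L'.U_free v) = lift_rep d v"
proof -
  define w where "w = (SOME w. w \<in> free_on (vcarr L') \<and> L'.U_free w = L'.U_free v)"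
  have w: "w \<in> free_on (vcarr L')" "L'.U_free w = L'.U_free v"
    using someI_ex[of "\<lambda>w. w \<in> free_on (vcarr L') \<and> L'.U_free w = L'.U_free v"] v
    by (auto simp: w_def)
  have "lift_rep d w = lift_rep d (v + (w - v))" by simp
  also have "\<dots> = vadd L' (lift_rep d v) (lift_rep d (w - v))" by (rule lift_rep_add)
  also have "lift_rep d (w - v) = vzero L'"
    using w v by (intro lift_rep_ker[OF d C]) (simp_all add: free_on_diff L'.U_free_diff)
  finally show ?thesis by (simp add: der_lift_def w_def lift_rep_def)
qed

lemma f_lift_rep:
  assumes d: "d \<in> Der L" and v: "v \<in> free_on (vcarr L')"
  shows "f (lift_rep d v) = d (f (L'.U_free v))"
  using v d by (simp add: lift_rep_def f_sec_free L.der_free_free_on map_free_free_on L.U_free_der_free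
      U_free_map_free)

lemma Der_der_lift:
  assumes d: "d \<in> Der L" and C: "uce_der L d ` C_cover \<subseteq> C_cover"
  shows "der_lift d \<in> Der L'"
proof (rule DerI)
  show "der_lift d \<in> extensional (vcarr L')" by (simp add: der_lift_def)
next
  fix x assume "x \<in> vcarr L'"
  then obtain v where v: "v \<in> free_on (vcarr L')" "L'.U_free v = x" by (rule L'.U_free_preimage)
  show "der_lift d x \<in> vcarr L'" using v der_lift_U_free[OF d C] by (auto simp: lift_rep_def)
  show "der_lift d (vsmult L' c x) = vsmult L' c (der_lift d x)" for c
    using v der_lift_U_free[OF d C, of v] der_lift_U_free[OF d C, of "psm c v"] by (simp add: free_on_psm L'.U_free_psm lift_rep_psm)
  have "der_lift d (valpha L' x) = lift_rep d (L'.alpha_free v)"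
    using v der_lift_U_free[OF d C, of "L'.alpha_free v"] by (simp add: L'.alpha_free_free_on L'.U_free_alpha_free)
  also have "\<dots> = sec_free (L.alpha_free (L.der_free d (map_free v)))"
    using v d by (simp add: lift_rep_def map_free_alpha_free L.der_free_alpha_free map_free_free_on)
  also have "\<dots> = valpha L' (der_lift d x)"
    using v d der_lift_U_free[OF d C, of v] by (simp add: alpha_sec_free lift_rep_def L.der_free_free_on map_free_free_on)
  finally show "der_lift d (valpha L' x) = valpha L' (der_lift d x)" .
next
  fix x y assume x: "x \<in> vcarr L'" and y: "y \<in> vcarr L'"
  obtain v where v: "v \<in> free_on (vcarr L')" "L'.U_free v = x" using x by (rule L'.U_free_preimage)
  obtain w where w: "w \<in> free_on (vcarr L')" "L'.U_free w = y" using y by (rule L'.U_free_preimage)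
  have comm: "f (der_lift d z) = d (f z)" if "z \<in> vcarr L'" for z
    using that by (metis L'.U_free_preimage f_lift_rep[OF d] der_lift_U_free[OF d C])
  have dxy: "der_lift d x \<in> vcarr L'" "der_lift d y \<in> vcarr L'"
    using v w der_lift_U_free[OF d C] by (auto simp: lift_rep_def)
  show "der_lift d (vadd L' x y) = vadd L' (der_lift d x) (der_lift d y)"
    using v w der_lift_U_free[OF d C, of v] der_lift_U_free[OF d C, of w] der_lift_U_free[OF d C, of "v + w"] by (simp add: free_on_add L'.U_free_add lift_rep_add)
  have "der_lift d (vbr L' x y) = lift_rep d (gen x y)"
    using x y der_lift_U_free[OF d C, of "gen x y"] by (simp add: free_on_gen L'.U_free_gen)
  also have "\<dots> = vadd L' (vbr L' (sec (d (f x))) (sec (valpha L (f y))))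
      (vbr L' (sec (valpha L (f x))) (sec (d (f y))))"
    using x y d by (simp add: lift_rep_def map_free_gen L.der_free_gen sec_free_add sec_free_gen Der_in)
  also have "vbr L' (sec (d (f x))) (sec (valpha L (f y))) = vbr L' (der_lift d x) (valpha L' y)"
    using x y dxy d comm by (intro br_sec_eq) (auto simp: f_alpha Der_in)
  also have "vbr L' (sec (valpha L (f x))) (sec (d (f y))) = vbr L' (valpha L' x) (der_lift d y)"
    using x y dxy d comm by (intro br_sec_eq) (auto simp: f_alpha Der_in)
  finally show "der_lift d (vbr L' x y) = vadd L' (vbr L' (valpha L' x) (der_lift d y)) (vbr L' (der_lift d x) (valpha L' y))"
    using dxy x y by (simp add: L'.add_comm)
qed

lemma f_der_lift:
  assumes d: "d \<in> Der L" and C: "uce_der L d ` C_cover \<subseteq> C_cover" and x: "x \<in> vcarr L'"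
  shows "f (der_lift d x) = d (f x)"
proof -
  obtain v where v: "v \<in> free_on (vcarr L')" "L'.U_free v = x" using x by (rule L'.U_free_preimage)
  then show ?thesis using der_lift_U_free[OF d C v(1)] f_lift_rep[OF d v(1)] by simp
qed

end

context hl_cover
begin

lemma lift_unique:
  assumes d1: "\<delta>1 \<in> Der L'" and d2: "\<delta>2 \<in> Der L'" and e: "\<And>x. x \<in> vcarr L' \<Longrightarrow> f (\<delta>1 x) = f (\<delta>2 x)"
  shows "\<delta>1 = \<delta>2"
proof (rule Der_eqI[OF d1 d2])
  fix x assume "x \<in> vcarr L'"
  then have "x \<in> lspan L' L'.alpha_brackets" using L'.carr_eq_lspan by simp
  then show "\<delta>1 x = \<delta>2 x"
  proof (rule lin_eq_on_lspan[OF L'.vspace_axioms L'.vspace_axioms Der_lin[OF d1] Der_lin[OF d2]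
        L'.alpha_brackets_subset, rotated])
    fix g assume "g \<in> L'.alpha_brackets"
    then obtain u v where uv: "u \<in> vcarr L'" "v \<in> vcarr L'" "g = vbr L' (valpha L' u) (valpha L' v)"
      by (auto simp: L'.alpha_brackets_def)
    have "vbr L' (valpha L' (valpha L' u)) (\<delta>1 (valpha L' v)) = vbr L' (valpha L' (valpha L' u)) (\<delta>2 (valpha L' v))"
      and "vbr L' (\<delta>1 (valpha L' u)) (valpha L' (valpha L' v)) = vbr L' (\<delta>2 (valpha L' u)) (valpha L' (valpha L' v))"
      using uv d1 d2 e by (auto intro!: br_congr simp: Der_in)
    then show "\<delta>1 g = \<delta>2 g" using uv by (simp add: Der_br[OF d1] Der_br[OF d2])
  qed
qed

lemma lift_preserves_ker:
  assumes d: "d \<in> Der L" and \<delta>: "\<delta> \<in> Der L'" and comm: "\<And>x. x \<in> vcarr L' \<Longrightarrow> f (\<delta> x) = d (f x)"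
  shows "\<delta> ` hl_ker L' L f \<subseteq> hl_ker L' L f"
  using d \<delta> comm by (auto simp: hl_ker_def Der_in L.Der_zero)

lemma lift_der_eq:
  assumes "\<delta> \<in> Der L'" "\<forall>x\<in>vcarr L'. f (\<delta> x) = d (f x)"
  shows "lift_der L' f d = \<delta>"
  unfolding lift_der_def by (rule the_equality) (use assms in \<open>auto intro: lift_unique\<close>)

lemma lift_der:
  assumes d: "d \<in> Der L" and C: "uce_der L d ` C_cover \<subseteq> C_cover"
  shows "lift_der L' f d \<in> Der L'" "\<forall>x\<in>vcarr L'. f (lift_der L' f d x) = d (f x)"
  using lift_der_eq[of "der_lift d" d] Der_der_lift[OF d C] f_der_lift[OF d C] by simp_all

theorem lift_der_criterion:
  "\<forall>d\<in>Der L.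
     ((\<exists>\<delta>\<in>Der L'. \<forall>x\<in>vcarr L'. f (\<delta> x) = d (f x)) \<longleftrightarrow> uce_der L d ` C_cover \<subseteq> C_cover) \<and>
     (\<forall>\<delta>1\<in>Der L'. \<forall>\<delta>2\<in>Der L'.
        (\<forall>x\<in>vcarr L'. f (\<delta>1 x) = d (f x)) \<and> (\<forall>x\<in>vcarr L'. f (\<delta>2 x) = d (f x)) \<longrightarrow> \<delta>1 = \<delta>2) \<and>
     (\<forall>\<delta>\<in>Der L'. (\<forall>x\<in>vcarr L'. f (\<delta> x) = d (f x)) \<longrightarrow> \<delta> ` hl_ker L' L f \<subseteq> hl_ker L' L f)"
proof (intro ballI conjI impI iffI)
  fix d assume d: "d \<in> Der L"
  show "uce_der L d ` C_cover \<subseteq> C_cover" if lifts: "\<exists>\<delta>\<in>Der L'. \<forall>x\<in>vcarr L'. f (\<delta> x) = d (f x)"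
  proof -
    obtain \<delta> where "\<delta> \<in> Der L'" "\<forall>x\<in>vcarr L'. f (\<delta> x) = d (f x)" using lifts ..
    then show ?thesis by (intro uce_der_C_cover_if_lift[OF d]) auto
  qed
  show "\<exists>\<delta>\<in>Der L'. \<forall>x\<in>vcarr L'. f (\<delta> x) = d (f x)" if "uce_der L d ` C_cover \<subseteq> C_cover"
    using lift_der[OF d that] by blast
  fix \<delta>1 \<delta>2 assume "\<delta>1 \<in> Der L'" "\<delta>2 \<in> Der L'"
    "(\<forall>x\<in>vcarr L'. f (\<delta>1 x) = d (f x)) \<and> (\<forall>x\<in>vcarr L'. f (\<delta>2 x) = d (f x))"
  then show "\<delta>1 = \<delta>2" by (intro lift_unique) auto
next
  fix d \<delta> assume "d \<in> Der L" "\<delta> \<in> Der L'" "\<forall>x\<in>vcarr L'. f (\<delta> x) = d (f x)"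
  then show "\<delta> ` hl_ker L' L f \<subseteq> hl_ker L' L f" by (intro lift_preserves_ker) auto
qed

lemma lift_der_inj_on: "inj_on (lift_der L' f) {d \<in> Der L. uce_der L d ` C_cover \<subseteq> C_cover}"
proof (rule inj_onI)
  fix d1 d2 assume d1: "d1 \<in> {d \<in> Der L. uce_der L d ` C_cover \<subseteq> C_cover}"
    and d2: "d2 \<in> {d \<in> Der L. uce_der L d ` C_cover \<subseteq> C_cover}"
    and e: "lift_der L' f d1 = lift_der L' f d2"
  show "d1 = d2"
  proof (rule Der_eqI)
    show "d1 \<in> Der L" "d2 \<in> Der L" using d1 d2 by auto
    fix y assume "y \<in> vcarr L"
    then obtain x where "x \<in> vcarr L'" "y = f x" using onto by auto
    then show "d1 y = d2 y" using lift_der(2)[of d1] lift_der(2)[of d2] d1 d2 e by auto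
  qed
qed

lemma lift_der_image:
  "lift_der L' f ` {d \<in> Der L. uce_der L d ` C_cover \<subseteq> C_cover}
     = {\<rho> \<in> Der L'. \<rho> ` hl_ker L' L f \<subseteq> hl_ker L' L f}"
proof (intro equalityI subsetI)
  fix \<rho> assume "\<rho> \<in> lift_der L' f ` {d \<in> Der L. uce_der L d ` C_cover \<subseteq> C_cover}"
  then obtain d where d: "d \<in> Der L" "uce_der L d ` C_cover \<subseteq> C_cover" "\<rho> = lift_der L' f d"
    by auto
  then show "\<rho> \<in> {\<rho> \<in> Der L'. \<rho> ` hl_ker L' L f \<subseteq> hl_ker L' L f}"
    using lift_der[OF d(1,2)] lift_preserves_ker[OF d(1)] by simp
next
  fix \<rho> assume "\<rho> \<in> {\<rho> \<in> Der L'. \<rho> ` hl_ker L' L f \<subseteq> hl_ker L' L f}"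
  then have \<rho>: "\<rho> \<in> Der L'" "\<rho> ` hl_ker L' L f \<subseteq> hl_ker L' L f" by auto
  obtain d where d: "d \<in> Der L" "\<forall>x\<in>vcarr L'. f (\<rho> x) = d (f x)"
    using Der_descends[OF L'.vspace_axioms L.vspace_axioms hom onto L'.br_in L'.alpha_in \<rho>] by blast
  then have "uce_der L d ` C_cover \<subseteq> C_cover" "lift_der L' f d = \<rho>"
    using uce_der_C_cover_if_lift[OF d(1) \<rho>(1)] lift_der_eq[OF \<rho>(1)] by auto
  then show "\<rho> \<in> lift_der L' f ` {d \<in> Der L. uce_der L d ` C_cover \<subseteq> C_cover}"
    using d(1) by (intro image_eqI[of _ _ d]) simp_all
qed

theorem lift_der_lin_iso:
  "der_lin_iso L L' {d \<in> Der L. uce_der L d ` C_cover \<subseteq> C_cover}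
     {\<rho> \<in> Der L'. \<rho> ` hl_ker L' L f \<subseteq> hl_ker L' L f} (lift_der L' f)"
  unfolding der_lin_iso_def bij_betw_def
proof (intro conjI ballI allI lift_der_inj_on lift_der_image)
  fix d1 d2 assume "d1 \<in> {d \<in> Der L. uce_der L d ` C_cover \<subseteq> C_cover}"
    "d2 \<in> {d \<in> Der L. uce_der L d ` C_cover \<subseteq> C_cover}"
  then show "lift_der L' f (der_add L d1 d2) = der_add L' (lift_der L' f d1) (lift_der L' f d2)"
    using lift_der[of d1] lift_der[of d2]
    by (intro lift_der_eq L'.Der_der_add) (auto simp: der_add_def f_add Der_in)
next
  fix c d assume "d \<in> {d \<in> Der L. uce_der L d ` C_cover \<subseteq> C_cover}"
  then show "lift_der L' f (der_smult L c d) = der_smult L' c (lift_der L' f d)"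
    using lift_der[of d] by (intro lift_der_eq L'.Der_der_smult) (auto simp: der_smult_def f_sm Der_in)
qed

end

lemma alpha_perfect_image:
  assumes "hl L" "perfect_hl L'" "hl_hom L' L f" "f ` vcarr L' = vcarr L"
  shows "alpha_perfect L"
proof -
  interpret L: hl L by fact
  interpret L': perfect_hl L' by fact
  let ?G = "{vbr L (valpha L x) (valpha L y) | x y. x \<in> vcarr L \<and> y \<in> vcarr L}"
  note f = hl_homD[OF assms(3)]
  have lin: "lin_on L' L f" using assms(3) by (simp add: lin_on_def hl_hom_def)
  have brackets: "f ` L'.alpha_brackets \<subseteq> ?G"
  proof
    fix y assume "y \<in> f ` L'.alpha_brackets"
    then obtain u v where "u \<in> vcarr L'" "v \<in> vcarr L'" "y = f (vbr L' (valpha L' u) (valpha L' v))"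
      by (auto simp: L'.alpha_brackets_def)
    then have "y = vbr L (valpha L (f u)) (valpha L (f v))" "f u \<in> vcarr L" "f v \<in> vcarr L"
      by (simp_all add: f)
    then show "y \<in> ?G" by blast
  qed
  have "vcarr L \<subseteq> lspan L ?G"
  proof
    fix y assume "y \<in> vcarr L"
    then obtain x where "x \<in> vcarr L'" "y = f x" using assms(4) by auto
    then show "y \<in> lspan L ?G"
      using lin_image_lspan[OF L'.vspace_axioms L.vspace_axioms lin L'.alpha_brackets_subset brackets]
        L'.carr_eq_lspan by auto
  qed
  moreover have "lspan L ?G \<subseteq> vcarr L" by (rule lspan_subset[OF L.vspace_axioms]) auto
  ultimately show ?thesis unfolding alpha_perfect_def by blast
qed

theorem theorem4p5:
  fixes L :: "('k::field, 'a) hlalg" and L' :: "('k, 'b) hlalg" and f :: "'b \<Rightarrow> 'a"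
  assumes "hom_leibniz L" and "hom_leibniz L'" and "alpha_cover L' L f"
  defines "C \<equiv> uce_map L f ` hl_ker (uce L') L' (uceU L')"
  shows "(\<forall>d\<in>Der L.
            ((\<exists>\<delta>\<in>Der L'. \<forall>x\<in>vcarr L'. f (\<delta> x) = d (f x)) \<longleftrightarrow> uce_der L d ` C \<subseteq> C) \<and>
            (\<forall>\<delta>1\<in>Der L'. \<forall>\<delta>2\<in>Der L'.
               (\<forall>x\<in>vcarr L'. f (\<delta>1 x) = d (f x)) \<and> (\<forall>x\<in>vcarr L'. f (\<delta>2 x) = d (f x))
               \<longrightarrow> \<delta>1 = \<delta>2) \<and>
            (\<forall>\<delta>\<in>Der L'. (\<forall>x\<in>vcarr L'. f (\<delta> x) = d (f x))
               \<longrightarrow> \<delta> ` hl_ker L' L f \<subseteq> hl_ker L' L f))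
       \<and> der_lin_iso L L' {d \<in> Der L. uce_der L d ` C \<subseteq> C}
            {\<rho> \<in> Der L'. \<rho> ` hl_ker L' L f \<subseteq> hl_ker L' L f} (lift_der L' f)
       \<and> der_lin_iso L (uce L) (Der L)
            {\<delta> \<in> Der (uce L). \<delta> ` hl_ker (uce L) L (uceU L) \<subseteq> hl_ker (uce L) L (uceU L)}
            (uce_der L)"
proof -
  have hl: "hl L" "hl L'"
    using assms(1,2) by (simp_all add: hl_def hl_axioms_def vspace_def hom_leibniz_def)
  from assms(3) have cover: "hl_hom L' L f" "f ` vcarr L' = vcarr L" "hl_ker L' L f \<subseteq> hl_center L'"
    and "alpha_perfect L'"
    by (simp_all add: alpha_cover_def central_ext_def)
  then have "perfect_hl L'" using hl(2) by (simp add: perfect_hl_def perfect_hl_axioms_def)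
  moreover have "perfect_hl L"
    using hl(1) alpha_perfect_image[OF hl(1) \<open>perfect_hl L'\<close> cover(1,2)]
    by (simp add: perfect_hl_def perfect_hl_axioms_def)
  ultimately interpret hl_cover L L' f
    using cover by (simp add: hl_cover_def hl_cover_axioms_def)
  show ?thesis
    unfolding C_def by (intro conjI lift_der_criterion lift_der_lin_iso L.uce_der_lin_iso)
qed

end
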